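(* Let $0<a_{1}<a_{2}$, let $\pi(x)=a_{1}e^{-a_{1}x}$ and $q(x)=a_{2}e^{-a_{2}x}$ on $\mathsf{E}=(0,\infty)$, and let $P$ be the Independent Metropolis–Hastings kernel with target $\pi$ and proposal $q$: \[ P(x,\mathrm{d}y)=\Big[1\wedge\frac{w(y)}{w(x)}\Big]q(y)\,\mathrm{d}y+\rho(x)\delta_{x}(\mathrm{d}y),\quad w=\pi/q,\quad\rho(x)=1-\int\Big[1\wedge\frac{w(y)}{w(x)}\Big]q(y)\,\mathrm{d}y. \] Then there exists $C>0$ such that for all $f\in\mathrm{L}_{0}^{2}(\pi)$ and $n\in\mathbb{N}$, \[ \|P^{n}f\|_{2}^{2}\le C\|f\|_{\mathrm{osc}}^{2}\,n^{-\frac{a_{1}}{a_{2}-a_{1}}}. \]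
   Context: $\|\cdot\|_{2}$ and $\mathrm{L}_{0}^{2}(\pi)$ (mean-zero square-integrable functions) refer to the measure $\pi(x)\mathrm{d}x$; $\|f\|_{\mathrm{osc}}=\operatorname{ess\,sup}f-\operatorname{ess\,inf}f$; $P^{n}f(x)=\int P^{n}(x,\mathrm{d}y)f(y)$. *)

theory Defs
  imports "HOL-Probability.Probability"
begin

definition exp_dens :: "real \<Rightarrow> real \<Rightarrow> real" where
  "exp_dens a x = a * exp (- a * x)"

definition imh_w :: "real \<Rightarrow> real \<Rightarrow> real \<Rightarrow> real" where
  "imh_w a1 a2 x = exp_dens a1 x / exp_dens a2 x"

definition imh_acc :: "real \<Rightarrow> real \<Rightarrow> real \<Rightarrow> real \<Rightarrow> real" where
  "imh_acc a1 a2 x y = min 1 (imh_w a1 a2 y / imh_w a1 a2 x)"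

definition imh_rho :: "real \<Rightarrow> real \<Rightarrow> real \<Rightarrow> real" where
  "imh_rho a1 a2 x = 1 - (LINT y:{0<..}|lborel. imh_acc a1 a2 x y * exp_dens a2 y)"

definition imh_P :: "real \<Rightarrow> real \<Rightarrow> (real \<Rightarrow> real) \<Rightarrow> real \<Rightarrow> real" where
  "imh_P a1 a2 f x =
     (LINT y:{0<..}|lborel. imh_acc a1 a2 x y * exp_dens a2 y * f y) + imh_rho a1 a2 x * f x"

definition piM :: "real \<Rightarrow> real measure" where
  "piM a1 = density lborel (\<lambda>x. ennreal (indicator {0<..} x * exp_dens a1 x))"

definition L2_0 :: "real measure \<Rightarrow> (real \<Rightarrow> real) set" where
  "L2_0 M = {f. f \<in> borel_measurable M \<and> integrable M (\<lambda>x. (f x)\<^sup>2) \<and> integral\<^sup>L M f = 0}"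

text \<open>Oscillation ess sup f - ess inf f (extended real; may be infinite).\<close>
definition osc :: "real measure \<Rightarrow> (real \<Rightarrow> real) \<Rightarrow> ereal" where
  "osc M f = esssup M (\<lambda>x. ereal (f x)) - (- esssup M (\<lambda>x. - ereal (f x)))"

end

theory Submission
  imports Defs
begin

text \<open>
  For exponential target and proposal the rejection probability \<open>\<rho>\<close> is explicit, and \<open>P\<close> acts
  diagonally on the deviation \<open>T u t = u t - \<Pi>(t)\<^sup>-\<^sup>1 \<integral>\<^sub>0\<^sup>t u \<pi>\<close> of \<open>u\<close> from its \<open>\<pi>\<close>-mean below \<open>t\<close>
  (\<open>\<Pi>\<close> is the distribution function of \<open>\<pi>\<close>): \<open>T (P u) = \<rho> T u\<close>. For \<open>\<pi>\<close>-centred \<open>u\<close> the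
  deviation can be inverted, \<open>u t = T u t - \<integral>\<^sub>t\<^sup>\<infinity> T u \<pi> / \<Pi>\<close>, hence
  \<open>P\<^sup>n f = \<rho>\<^sup>n T f - \<integral>\<^sub>t\<^sup>\<infinity> \<rho>\<^sup>n T f \<pi> / \<Pi>\<close>. With \<open>|T f| \<le> osc f\<close> and \<open>\<rho> \<le> (a2 / a1) \<Pi>\<close> this gives
  \<open>\<parallel>P\<^sup>n f\<parallel>\<^sup>2 \<le> 2 (1 + (a2 / a1)\<^sup>2) (osc f)\<^sup>2 E\<^sub>\<pi>[\<rho>\<^sup>n\<^sup>-\<^sup>1]\<close>. Finally \<open>\<rho> s \<le> 1 - exp (- (a2 - a1) s)\<close>,
  and translating \<open>s\<close> by \<open>ln n / (a2 - a1)\<close> shows \<open>E\<^sub>\<pi>[\<rho>\<^sup>n\<^sup>-\<^sup>1] = O(n powr (- a1 / (a2 - a1)))\<close>.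
\<close>

lemma set_integral_Ioi_FTC_nonneg:
  fixes f F :: "real \<Rightarrow> real"
  assumes "\<And>x. c < x \<Longrightarrow> (F has_real_derivative f x) (at x)" "\<And>x. c < x \<Longrightarrow> isCont f x"
    and "\<And>x. c < x \<Longrightarrow> 0 \<le> f x" "(F \<longlongrightarrow> A) (at_right c)" "(F \<longlongrightarrow> B) at_top"
  shows "set_integrable lborel {c<..} f" "(LINT x:{c<..}|lborel. f x) = B - A"
proof -
  have Ioi: "einterval (ereal c) \<infinity> = {c<..}" by (auto simp: einterval_iff)
  have "set_integrable lborel (einterval (ereal c) \<infinity>) f" "(LBINT x=ereal c..\<infinity>. f x) = B - A"
    by (rule interval_integral_FTC_nonneg[where F=F and A=A and B=B];
        use assms in \<open>auto simp: ereal_tendsto_simps\<close>)+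
  then show "set_integrable lborel {c<..} f" "(LINT x:{c<..}|lborel. f x) = B - A"
    by (simp_all add: Ioi interval_integral_Ioi)
qed

lemma set_integral_Ioi_split:
  fixes g :: "real \<Rightarrow> real"
  assumes "set_integrable lborel {c<..} g" "c \<le> d"
  shows "(LINT y:{c<..}|lborel. g y) = (LINT y:{c<..d}|lborel. g y) + (LINT y:{d<..}|lborel. g y)"
proof -
  have "set_integrable lborel {c<..d} g" "set_integrable lborel {d<..} g"
    using assms by (auto intro: set_integrable_subset)
  then have "(LINT y:{c<..d} \<union> {d<..}|lborel. g y) = (LINT y:{c<..d}|lborel. g y) + (LINT y:{d<..}|lborel. g y)"
    by (intro set_integral_Un) auto
  moreover have "{c<..d} \<union> {d<..} = {c<..}" using assms(2) by auto
  ultimately show ?thesis by simp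
qed

lemma abs_set_integral_le:
  fixes f g :: "'a \<Rightarrow> real"
  assumes g: "set_integrable M A g" and fg: "\<And>x. x \<in> A \<Longrightarrow> \<bar>f x\<bar> \<le> g x"
  shows "\<bar>LINT x:A|M. f x\<bar> \<le> (LINT x:A|M. g x)"
proof (cases "set_integrable M A f")
  case True
  have "\<bar>LINT x:A|M. f x\<bar> \<le> (LINT x:A|M. \<bar>f x\<bar>)"
    unfolding set_lebesgue_integral_def
    by (rule order_trans[OF integral_abs_bound]) (simp add: abs_mult)
  also have "\<dots> \<le> (LINT x:A|M. g x)"
    by (rule set_integral_mono[OF set_integrable_abs[OF True] g fg])
  finally show ?thesis .
next
  case False
  then have "(LINT x:A|M. f x) = 0"
    by (simp add: set_lebesgue_integral_def set_integrable_def not_integrable_integral_eq)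
  moreover have "0 \<le> (LINT x:A|M. g x)"
    unfolding set_lebesgue_integral_def
    by (rule integral_nonneg_AE) (auto intro: order_trans[OF abs_ge_zero fg] split: split_indicator)
  ultimately show ?thesis by simp
qed

lemma integral_swap_product_bound:
  fixes F :: "real \<Rightarrow> real \<Rightarrow> real" and g h :: "real \<Rightarrow> real"
  assumes [measurable]: "case_prod F \<in> borel_measurable (lborel \<Otimes>\<^sub>M lborel)"
    and ig: "integrable lborel g" and ih: "integrable lborel h"
    and ng: "\<And>x. 0 \<le> g x" and nh: "\<And>y. 0 \<le> h y"
    and b: "\<And>x y. \<bar>F x y\<bar> \<le> g x * h y"
  shows "(\<integral>x. (\<integral>y. F x y \<partial>lborel) \<partial>lborel) = (\<integral>y. (\<integral>x. F x y \<partial>lborel) \<partial>lborel)"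
proof -
  have [measurable]: "g \<in> borel_measurable borel" "h \<in> borel_measurable borel"
    using ig ih by (auto dest: borel_measurable_integrable)
  have iy: "integrable lborel (\<lambda>y. F x y)" for x
    by (rule Bochner_Integration.integrable_bound[where f="\<lambda>y. g x * h y"]) (use ih b ng nh in auto)
  have "integrable (lborel \<Otimes>\<^sub>M lborel) (case_prod F)"
  proof (rule lborel_pair.Fubini_integrable)
    show "integrable lborel (\<lambda>x. \<integral>y. norm (case_prod F (x, y)) \<partial>lborel)"
    proof (rule Bochner_Integration.integrable_bound[where f="\<lambda>x. g x * (\<integral>y. h y \<partial>lborel)"])
      show "integrable lborel (\<lambda>x. g x * (\<integral>y. h y \<partial>lborel))" using ig by simp
      show "(\<lambda>x. \<integral>y. norm (case_prod F (x, y)) \<partial>lborel) \<in> borel_measurable lborel" by measurable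
      show "AE x in lborel. norm (\<integral>y. norm (case_prod F (x, y)) \<partial>lborel) \<le> norm (g x * (\<integral>y. h y \<partial>lborel))"
      proof (intro AE_I2)
        fix x
        have "(\<integral>y. norm (F x y) \<partial>lborel) \<le> (\<integral>y. g x * h y \<partial>lborel)"
          by (rule integral_mono) (use iy ih b in auto)
        also have "\<dots> = g x * (\<integral>y. h y \<partial>lborel)" by simp
        finally have "(\<integral>y. norm (F x y) \<partial>lborel) \<le> g x * (\<integral>y. h y \<partial>lborel)" .
        moreover have "0 \<le> (\<integral>y. norm (F x y) \<partial>lborel)" by simp
        ultimately show "norm (\<integral>y. norm (case_prod F (x, y)) \<partial>lborel) \<le> norm (g x * (\<integral>y. h y \<partial>lborel))"
          by simp
      qed
    qed
    show "AE x in lborel. integrable lborel (\<lambda>y. case_prod F (x, y))" using iy by simp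
  qed measurable
  thus ?thesis by (rule lborel_pair.Fubini_integral[symmetric])
qed

lemma exp_minus_le_power:
  fixes x :: real
  assumes "0 < x" "0 < k"
  shows "exp (- x) \<le> (real k / x) ^ k"
proof -
  have "x / real k \<le> exp (x / real k)"
    using exp_ge_add_one_self[of "x / real k"] by linarith
  then have "(x / real k) ^ k \<le> exp (x / real k) ^ k"
    using assms by (intro power_mono) auto
  also have "\<dots> = exp x" using assms by (simp add: exp_of_nat_mult[symmetric])
  finally have "1 / exp x \<le> 1 / (x / real k) ^ k" using assms by (intro divide_left_mono) auto
  then show ?thesis by (simp add: exp_minus field_simps power_divide inverse_eq_divide)
qed

section \<open>Exponential densities\<close>

definition exp_cdf :: "real \<Rightarrow> real \<Rightarrow> real" where
  "exp_cdf a x = 1 - exp (- a * x)"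

lemma exp_dens_pos: "0 < a \<Longrightarrow> 0 < exp_dens a x"
  by (simp add: exp_dens_def)

lemma exp_dens_measurable [measurable]: "exp_dens a \<in> borel_measurable borel"
  unfolding exp_dens_def by measurable

lemma exp_cdf_measurable [measurable]: "exp_cdf a \<in> borel_measurable borel"
  unfolding exp_cdf_def by measurable

lemma exp_cdf_pos: "0 < a \<Longrightarrow> 0 < x \<Longrightarrow> 0 < exp_cdf a x"
  by (simp add: exp_cdf_def)

lemma exp_cdf_le_1: "exp_cdf a x \<le> 1"
  by (simp add: exp_cdf_def)

lemma exp_cdf_mono: "0 \<le> a \<Longrightarrow> x \<le> y \<Longrightarrow> exp_cdf a x \<le> exp_cdf a y"
  by (simp add: exp_cdf_def mult_left_mono)

lemma tendsto_exp_minus_at_top: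
  fixes a :: real
  assumes "0 < a"
  shows "((\<lambda>x. exp (- a * x)) \<longlongrightarrow> 0) at_top"
proof -
  have "filterlim (\<lambda>x. a * x) at_top at_top"
    by (rule filterlim_tendsto_pos_mult_at_top[OF tendsto_const assms filterlim_ident])
  then have "filterlim (\<lambda>x. - a * x) at_bot at_top" by (simp add: filterlim_uminus_at_bot)
  then show ?thesis by (rule filterlim_compose[OF exp_at_bot])
qed

lemma exp_dens_Ioi:
  assumes "0 < a"
  shows "set_integrable lborel {c<..} (exp_dens a)" "(LINT x:{c<..}|lborel. exp_dens a x) = exp (- a * c)"
proof -
  have lim0: "((\<lambda>x. - exp (- a * x)) \<longlongrightarrow> - exp (- a * c)) (at_right c)" by (intro tendsto_intros)
  have lim1: "((\<lambda>x. - exp (- a * x)) \<longlongrightarrow> - 0) at_top"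
    by (intro tendsto_minus tendsto_exp_minus_at_top assms)
  have deriv: "((\<lambda>x. - exp (- a * x)) has_real_derivative exp_dens a x) (at x)" for x
    unfolding exp_dens_def by (auto intro!: derivative_eq_intros)
  have cont: "isCont (exp_dens a) x" for x
    unfolding exp_dens_def by (intro continuous_intros)
  have nonneg: "0 \<le> exp_dens a x" for x
    using exp_dens_pos[OF assms] less_imp_le by blast
  note FTC = set_integral_Ioi_FTC_nonneg[OF deriv cont nonneg lim0 lim1]
  show "set_integrable lborel {c<..} (exp_dens a)" by (rule FTC)
  show "(LINT x:{c<..}|lborel. exp_dens a x) = exp (- a * c)" using FTC(2) by simp
qed

lemma set_integral_exp_dens_Ioc:
  assumes "0 < a" "0 \<le> t"
  shows "(LINT x:{0<..t}|lborel. exp_dens a x) = exp_cdf a t"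
  using set_integral_Ioi_split[OF exp_dens_Ioi(1)[OF assms(1)] assms(2)] exp_dens_Ioi(2)[OF assms(1)]
  by (simp add: exp_cdf_def)

lemma set_integrable_exp_dens_bound:
  assumes "0 < a" and [measurable]: "g \<in> borel_measurable borel"
    and "\<And>y. c < y \<Longrightarrow> \<bar>g y\<bar> \<le> C * exp_dens a y"
  shows "set_integrable lborel {c<..} g"
proof (rule set_integrable_bound[where f="\<lambda>y. C * exp_dens a y"])
  show "set_integrable lborel {c<..} (\<lambda>y. C * exp_dens a y)"
    using exp_dens_Ioi(1)[OF assms(1)] by simp
qed (use assms(3) in \<open>auto simp: set_borel_measurable_def intro: order_trans[OF _ abs_ge_self]\<close>)

lemma tendsto_exp_cdf: "0 < a \<Longrightarrow> (exp_cdf a \<longlongrightarrow> 1) at_top"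
  using tendsto_diff[OF tendsto_const tendsto_exp_minus_at_top, of a 1]
  by (simp add: exp_cdf_def[abs_def])

lemma exp_dens_div_exp_cdf_sq_Ioi:
  assumes "0 < a" "0 < c"
  shows "set_integrable lborel {c<..} (\<lambda>s. exp_dens a s / exp_cdf a s ^ 2)"
    "(LINT s:{c<..}|lborel. exp_dens a s / exp_cdf a s ^ 2) = 1 / exp_cdf a c - 1"
proof -
  have pos: "0 < exp_cdf a s" if "c < s" for s using exp_cdf_pos[OF assms(1), of s] that assms by simp
  have deriv: "((\<lambda>s. - 1 / exp_cdf a s) has_real_derivative exp_dens a s / exp_cdf a s ^ 2) (at s)"
    if "c < s" for s
    using pos[OF that] unfolding exp_cdf_def exp_dens_def
    by (auto intro!: derivative_eq_intros simp: field_simps power2_eq_square)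
  have cont: "isCont (\<lambda>s. exp_dens a s / exp_cdf a s ^ 2) s" if "c < s" for s
    using pos[OF that] unfolding exp_cdf_def exp_dens_def by (auto intro!: continuous_intros)
  have nonneg: "0 \<le> exp_dens a s / exp_cdf a s ^ 2" for s
    using exp_dens_pos[OF assms(1), of s] by simp
  have lim0: "((\<lambda>s. - 1 / exp_cdf a s) \<longlongrightarrow> - 1 / exp_cdf a c) (at_right c)"
    using exp_cdf_pos[OF assms] unfolding exp_cdf_def by (intro tendsto_intros) auto
  have lim1: "((\<lambda>s. - 1 / exp_cdf a s) \<longlongrightarrow> - 1 / 1) at_top"
    by (intro tendsto_intros tendsto_exp_cdf assms) simp
  note FTC = set_integral_Ioi_FTC_nonneg[OF deriv cont nonneg lim0 lim1]
  show "set_integrable lborel {c<..} (\<lambda>s. exp_dens a s / exp_cdf a s ^ 2)" by (rule FTC)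
  show "(LINT s:{c<..}|lborel. exp_dens a s / exp_cdf a s ^ 2) = 1 / exp_cdf a c - 1"
    using FTC(2) by simp
qed

lemma integral_Ici_exp_dens_div_exp_cdf_sq:
  assumes "0 < a" "0 < r" "0 < t"
  shows "(\<integral>s. indicator {r..} s * (indicator {t<..} s * (exp_dens a s / exp_cdf a s ^ 2)) \<partial>lborel)
    = 1 / exp_cdf a (max r t) - 1"
proof -
  have "AE s in lborel. indicator {r..} s * (indicator {t<..} s * (exp_dens a s / exp_cdf a s ^ 2))
      = indicator {max r t<..} s *\<^sub>R (exp_dens a s / exp_cdf a s ^ 2)"
    using AE_lborel_singleton[of r] by eventually_elim (auto split: split_indicator)
  then have "(\<integral>s. indicator {r..} s * (indicator {t<..} s * (exp_dens a s / exp_cdf a s ^ 2)) \<partial>lborel)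
      = (LINT s:{max r t<..}|lborel. exp_dens a s / exp_cdf a s ^ 2)"
    unfolding set_lebesgue_integral_def by (rule integral_cong_AE[rotated 2]) measurable
  also have "\<dots> = 1 / exp_cdf a (max r t) - 1"
    using assms by (simp add: exp_dens_div_exp_cdf_sq_Ioi(2))
  finally show ?thesis .
qed

lemma integrable_exp_dens_abs:
  assumes "0 < a"
  shows "integrable lborel (\<lambda>s. exp_dens a \<bar>s\<bar>)"
proof -
  define g where "g s = indicator {0<..} s * exp_dens a s" for s
  have g: "integrable lborel g"
    using exp_dens_Ioi(1)[OF assms, of 0] unfolding g_def set_integrable_def by simp
  then have "integrable lborel (\<lambda>s. g (0 + (- 1) * s))"
    by (intro lborel_integrable_real_affine) simp_all
  with g have int: "integrable lborel (\<lambda>s. g s + g (- s))" by simp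
  have "AE s in lborel. g s + g (- s) = exp_dens a \<bar>s\<bar>"
    using AE_lborel_singleton[of 0] by eventually_elim (auto simp: g_def indicator_def abs_if)
  then show ?thesis by (rule integrable_cong_AE_imp[OF int, rotated]) measurable
qed

lemma exp_minus_exp_mult_exp_dens_le:
  assumes "0 < a" "0 < k" "2 * a \<le> real k * b"
  shows "exp (- exp (- b * s)) * exp_dens a s \<le> real k ^ k * exp_dens a \<bar>s\<bar>"
proof (cases "0 \<le> s")
  case True
  have "exp (- exp (- b * s)) * exp_dens a s \<le> 1 * exp_dens a s"
    using exp_dens_pos[OF assms(1), of s] by (intro mult_right_mono) auto
  also have "\<dots> \<le> real k ^ k * exp_dens a \<bar>s\<bar>"
    using True exp_dens_pos[OF assms(1), of s] one_le_power[of "real k" k] assms(2)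
    by (simp add: mult_right_mono)
  finally show ?thesis .
next
  case False
  have "exp (- exp (- b * s)) \<le> (real k / exp (- b * s)) ^ k"
    by (rule exp_minus_le_power[OF exp_gt_zero assms(2)])
  also have "\<dots> = real k ^ k * exp (real k * b * s)"
    by (simp add: power_divide power_mult_distrib exp_minus[symmetric] exp_of_nat_mult[symmetric]
        divide_inverse mult.assoc)
  finally have "exp (- exp (- b * s)) * exp_dens a s \<le> real k ^ k * exp (real k * b * s) * exp_dens a s"
    using exp_dens_pos[OF assms(1), of s] by (intro mult_right_mono) auto
  also have "\<dots> = real k ^ k * (a * exp ((real k * b - a) * s))"
    by (simp add: exp_dens_def exp_add[symmetric] algebra_simps)
  also have "\<dots> \<le> real k ^ k * exp_dens a \<bar>s\<bar>"
  proof -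
    have "(real k * b - a) * s \<le> a * s" using False assms(3) by (intro mult_right_mono_neg) auto
    moreover have "exp_dens a \<bar>s\<bar> = a * exp (a * s)" using False by (simp add: exp_dens_def)
    ultimately show ?thesis using assms(1) by (simp add: mult_left_mono)
  qed
  finally show ?thesis .
qed

lemma integrable_exp_minus_exp_mult_exp_dens:
  assumes "0 < a" "0 < b"
  shows "integrable lborel (\<lambda>s. exp (- exp (- b * s)) * exp_dens a s)"
proof -
  obtain k :: nat where k: "0 < k" "2 * a \<le> real k * b"
  proof -
    obtain m :: nat where "2 * a / b \<le> real m" using real_arch_simple by blast
    then show thesis using assms(2) by (intro that[of "Suc m"]) (auto simp: field_simps)
  qed
  have int: "integrable lborel (\<lambda>s. real k ^ k * exp_dens a \<bar>s\<bar>)"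
    using integrable_exp_dens_abs[OF assms(1)] by simp
  show ?thesis
  proof (rule Bochner_Integration.integrable_bound[OF int])
    show "(\<lambda>s. exp (- exp (- b * s)) * exp_dens a s) \<in> borel_measurable lborel" by measurable
    show "AE s in lborel. norm (exp (- exp (- b * s)) * exp_dens a s) \<le> norm (real k ^ k * exp_dens a \<bar>s\<bar>)"
      using exp_minus_exp_mult_exp_dens_le[OF assms(1) k] exp_dens_pos[OF assms(1)]
      by (intro AE_I2) (simp add: abs_mult abs_of_pos)
  qed
qed

text \<open>Translating by \<open>ln n / b\<close> turns the weight for \<open>n\<close> into the weight for \<open>1\<close>,
  which is where the rate \<open>n powr (- a / b)\<close> comes from.\<close>
lemma integral_exp_minus_mult_exp_mult_exp_dens:
  assumes "0 < a" "0 < b" "0 < n"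
  shows "integrable lborel (\<lambda>s. exp (- n * exp (- b * s)) * exp_dens a s)"
    and "(\<integral>s. exp (- n * exp (- b * s)) * exp_dens a s \<partial>lborel)
      = n powr (- (a / b)) * (\<integral>s. exp (- exp (- b * s)) * exp_dens a s \<partial>lborel)"
proof -
  have shift: "exp (- n * exp (- b * (ln n / b + 1 * s))) * exp_dens a (ln n / b + 1 * s)
      = n powr (- (a / b)) * (exp (- exp (- b * s)) * exp_dens a s)" for s
  proof -
    have "n * exp (- b * (ln n / b + s)) = exp (- b * s)"
      using assms by (simp add: algebra_simps exp_add exp_minus exp_diff inverse_eq_divide)
    moreover have "exp (- a * (ln n / b + s)) = n powr (- (a / b)) * exp (- a * s)"
      using assms by (simp add: powr_def algebra_simps exp_add[symmetric])
    ultimately show ?thesis by (simp add: exp_dens_def algebra_simps)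
  qed
  have "integrable lborel (\<lambda>s. exp (- n * exp (- b * (ln n / b + 1 * s))) * exp_dens a (ln n / b + 1 * s))"
    using integrable_exp_minus_exp_mult_exp_dens[OF assms(1,2)] by (simp only: shift) simp
  then show "integrable lborel (\<lambda>s. exp (- n * exp (- b * s)) * exp_dens a s)"
    by (subst (asm) lborel_integrable_real_affine_iff) simp_all
  have "(\<integral>s. exp (- n * exp (- b * s)) * exp_dens a s \<partial>lborel)
      = \<bar>1\<bar> *\<^sub>R (\<integral>s. exp (- n * exp (- b * (ln n / b + 1 * s))) * exp_dens a (ln n / b + 1 * s) \<partial>lborel)"
    by (rule lborel_integral_real_affine) simp
  then show "(\<integral>s. exp (- n * exp (- b * s)) * exp_dens a s \<partial>lborel)
      = n powr (- (a / b)) * (\<integral>s. exp (- exp (- b * s)) * exp_dens a s \<partial>lborel)"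
    by (simp only: shift) simp
qed

lemma integral_exp_minus_exp_mult_exp_dens_pos:
  assumes "0 < a" "0 < b"
  shows "0 < (\<integral>s. exp (- exp (- b * s)) * exp_dens a s \<partial>lborel)"
proof -
  have pos: "0 < exp (- exp (- b * s)) * exp_dens a s" for s
    using exp_dens_pos[OF assms(1)] by simp
  have "(\<integral>s. exp (- exp (- b * s)) * exp_dens a s \<partial>lborel) \<noteq> 0"
  proof
    assume "(\<integral>s. exp (- exp (- b * s)) * exp_dens a s \<partial>lborel) = 0"
    then have "AE s in lborel. exp (- exp (- b * s)) * exp_dens a s = 0"
      using integral_nonneg_eq_0_iff_AE[OF integrable_exp_minus_exp_mult_exp_dens[OF assms]] pos
      by (simp add: less_imp_le)
    moreover have "exp (- exp (- b * s)) * exp_dens a s \<noteq> 0" for s using pos[of s] by linarith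
    ultimately have "AE s::real in lborel. False" by (auto elim: eventually_mono)
    then show False by (simp add: AE_iff_null null_sets_def)
  qed
  moreover have "0 \<le> (\<integral>s. exp (- exp (- b * s)) * exp_dens a s \<partial>lborel)"
    using pos by (simp add: integral_nonneg_AE less_imp_le)
  ultimately show ?thesis by simp
qed

definition bdd_on_pos :: "real \<Rightarrow> (real \<Rightarrow> real) \<Rightarrow> bool" where
  "bdd_on_pos B u \<longleftrightarrow> u \<in> borel_measurable borel \<and> (\<forall>x>0. \<bar>u x\<bar> \<le> B)"

lemma bdd_on_posI:
  "u \<in> borel_measurable borel \<Longrightarrow> (\<And>x. 0 < x \<Longrightarrow> \<bar>u x\<bar> \<le> B) \<Longrightarrow> bdd_on_pos B u"
  by (simp add: bdd_on_pos_def)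

lemma bdd_on_posD:
  assumes "bdd_on_pos B u"
  shows bdd_on_pos_measurable: "u \<in> borel_measurable borel"
    and bdd_on_pos_bound: "0 < x \<Longrightarrow> \<bar>u x\<bar> \<le> B"
    and bdd_on_pos_nonneg: "0 \<le> B"
  using assms unfolding bdd_on_pos_def by (auto intro: order_trans[OF abs_ge_zero, of "u 1"])

lemma bdd_on_pos_mult:
  assumes "bdd_on_pos B u" "bdd_on_pos C v"
  shows "bdd_on_pos (B * C) (\<lambda>x. u x * v x)"
proof (rule bdd_on_posI)
  show "(\<lambda>x. u x * v x) \<in> borel_measurable borel"
    using bdd_on_pos_measurable[OF assms(1)] bdd_on_pos_measurable[OF assms(2)] by measurable
  show "\<bar>u x * v x\<bar> \<le> B * C" if "0 < x" for x
    unfolding abs_mult using assms that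
    by (intro mult_mono) (auto intro: bdd_on_pos_bound bdd_on_pos_nonneg)
qed

lemma bdd_on_pos_interval:
  assumes "u \<in> borel_measurable borel" "\<And>x. 0 < x \<Longrightarrow> u x \<in> {lo..hi}"
  shows "bdd_on_pos (max \<bar>lo\<bar> \<bar>hi\<bar>) u"
  using assms by (intro bdd_on_posI) (force simp: abs_le_iff)+

lemma set_integrable_exp_dens_mult:
  assumes "0 < a" "bdd_on_pos B u" "A \<in> sets borel" "A \<subseteq> {0<..}"
  shows "set_integrable lborel A (\<lambda>y. exp_dens a y * u y)"
proof -
  have [measurable]: "u \<in> borel_measurable borel" using assms(2) by (rule bdd_on_pos_measurable)
  have "set_integrable lborel {0<..} (\<lambda>y. exp_dens a y * u y)"
  proof (rule set_integrable_exp_dens_bound[OF assms(1)])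
    show "\<bar>exp_dens a y * u y\<bar> \<le> B * exp_dens a y" if "0 < y" for y
      using bdd_on_pos_bound[OF assms(2) that] exp_dens_pos[OF assms(1), of y]
      by (simp add: abs_mult mult.commute mult_left_mono)
  qed measurable
  then show ?thesis by (rule set_integrable_subset) (use assms in auto)
qed

lemma bdd_on_pos_inv_exp_cdf_max:
  assumes "0 < a" "0 < t"
  shows "bdd_on_pos (1 / exp_cdf a t) (\<lambda>r. 1 / exp_cdf a (max r t) - 1)"
proof (rule bdd_on_posI)
  show "\<bar>1 / exp_cdf a (max r t) - 1\<bar> \<le> 1 / exp_cdf a t" for r
  proof -
    have "exp_cdf a t \<le> exp_cdf a (max r t)" using assms(1) by (intro exp_cdf_mono) auto
    then have "1 / exp_cdf a (max r t) \<le> 1 / exp_cdf a t" "1 \<le> 1 / exp_cdf a (max r t)"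
      using exp_cdf_pos[OF assms] exp_cdf_le_1[of a "max r t"] by (auto intro: divide_left_mono)
    then show ?thesis by simp
  qed
qed measurable

lemma AE_piM_iff:
  assumes "0 < a"
  shows "(AE x in piM a. Q x) \<longleftrightarrow> (AE x in lborel. 0 < x \<longrightarrow> Q x)"
  unfolding piM_def using exp_dens_pos[OF assms]
  by (subst AE_density) (auto split: split_indicator)

lemma integral_piM:
  assumes "0 < a" "g \<in> borel_measurable borel"
  shows "(\<integral>x. g x \<partial>piM a) = (LINT x:{0<..}|lborel. exp_dens a x * g x)"
  unfolding piM_def set_lebesgue_integral_def using assms exp_dens_pos[OF assms(1)]
  by (subst integral_density) (auto simp: less_imp_le mult.assoc)

lemma prob_space_piM:
  assumes "0 < a"
  shows "prob_space (piM a)"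
proof
  have "emeasure (piM a) (space (piM a)) = (\<integral>\<^sup>+ x. ennreal (indicator {0<..} x * exp_dens a x) \<partial>lborel)"
    unfolding piM_def by (subst emeasure_density) auto
  also have "\<dots> = ennreal (\<integral>x. indicator {0<..} x * exp_dens a x \<partial>lborel)"
    using exp_dens_Ioi(1)[OF assms, of 0] exp_dens_pos[OF assms]
    by (intro nn_integral_eq_integral) (auto simp: set_integrable_def less_imp_le)
  also have "(\<integral>x. indicator {0<..} x * exp_dens a x \<partial>lborel) = 1"
    using exp_dens_Ioi(2)[OF assms, of 0] by (simp add: set_lebesgue_integral_def)
  finally show "emeasure (piM a) (space (piM a)) = 1" by simp
qed

lemma osc_cases:
  assumes "prob_space M"
  obtains (infinite) "(osc M f)\<^sup>2 = \<infinity>"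
    | (finite) lo hi where "lo \<le> hi" "osc M f = ereal (hi - lo)" "AE x in M. lo \<le> f x \<and> f x \<le> hi"
proof -
  define E1 E2 where "E1 = esssup M (\<lambda>x. ereal (f x))" and "E2 = esssup M (\<lambda>x. - ereal (f x))"
  have osc: "osc M f = E1 - (- E2)" unfolding osc_def E1_def E2_def by simp
  show thesis
  proof (cases "\<exists>hi m. E1 = ereal hi \<and> E2 = ereal m")
    case False
    then have "osc M f = \<infinity> \<or> osc M f = - \<infinity>"
      unfolding osc by (cases E1 rule: ereal_cases; cases E2 rule: ereal_cases) auto
    then show thesis by (intro infinite) (auto simp: power2_eq_square)
  next
    case True
    then obtain hi m where E: "E1 = ereal hi" "E2 = ereal m" by blast
    have "AE x in M. f x \<le> hi"
      using esssup_AE[of "\<lambda>x. ereal (f x)" M] unfolding E1_def[symmetric] E by simp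
    moreover have "AE x in M. - m \<le> f x"
      using esssup_AE[of "\<lambda>x. - ereal (f x)" M] unfolding E2_def[symmetric] E
      by (auto elim!: eventually_mono)
    ultimately have AE: "AE x in M. - m \<le> f x \<and> f x \<le> hi" by eventually_elim simp
    have "- m \<le> hi"
    proof (rule ccontr)
      assume "\<not> - m \<le> hi"
      with AE have "AE x in M. False" by (auto elim: eventually_mono)
      with assms show False by (simp add: prob_space.AE_False)
    qed
    with AE show thesis by (intro finite[of "- m" hi]) (simp_all add: osc E)
  qed
qed

lemma sets_piM [measurable_cong]: "sets (piM a) = sets borel"
  by (simp add: piM_def)

section \<open>The independent Metropolis-Hastings kernel\<close>

locale imh =
  fixes a1 a2 :: real
  assumes a1_pos: "0 < a1" and a1_less_a2: "a1 < a2"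
begin

abbreviation P :: "(real \<Rightarrow> real) \<Rightarrow> real \<Rightarrow> real" where "P \<equiv> imh_P a1 a2"
abbreviation \<rho> :: "real \<Rightarrow> real" where "\<rho> \<equiv> imh_rho a1 a2"

lemma a2_pos: "0 < a2"
  using a1_pos a1_less_a2 by simp

lemmas dens1_pos = exp_dens_pos[OF a1_pos] and dens2_pos = exp_dens_pos[OF a2_pos]

definition dens_ratio :: "real \<Rightarrow> real" where
  "dens_ratio x = exp_dens a2 x / exp_dens a1 x"

lemma dens_ratio_eq: "dens_ratio x = a2 / a1 * exp (- (a2 - a1) * x)"
  using a1_pos by (simp add: dens_ratio_def exp_dens_def exp_minus exp_diff field_simps)

lemma dens_ratio_pos: "0 < dens_ratio x"
  using dens1_pos dens2_pos by (simp add: dens_ratio_def)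

lemma exp_dens_mult_dens_ratio: "exp_dens a1 x * dens_ratio x = exp_dens a2 x"
  using dens1_pos[of x] by (simp add: dens_ratio_def)

lemma dens_ratio_antimono:
  assumes "x \<le> y"
  shows "dens_ratio y \<le> dens_ratio x"
proof -
  have "- (a2 - a1) * y \<le> - (a2 - a1) * x"
    using assms a1_less_a2 by (intro mult_left_mono_neg) auto
  then show ?thesis
    using a1_pos a2_pos unfolding dens_ratio_eq by (intro mult_left_mono) auto
qed

lemma exp_le_dens_ratio: "exp (- (a2 - a1) * x) \<le> dens_ratio x"
proof -
  have "1 \<le> a2 / a1" using a1_pos a1_less_a2 by simp
  then show ?thesis unfolding dens_ratio_eq using mult_right_mono[of 1 "a2 / a1"] by simp
qed

lemma dens_ratio_le: "0 \<le> x \<Longrightarrow> dens_ratio x \<le> a2 / a1"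
  using dens_ratio_antimono[of 0 x] by (simp add: dens_ratio_eq)

lemma dens_ratio_measurable [measurable]: "dens_ratio \<in> borel_measurable borel"
  unfolding dens_ratio_def[abs_def] by measurable

text \<open>\<open>dens_ratio = 1 / imh_w\<close> is decreasing, so the minimum in \<open>imh_acc\<close> is attained at \<open>max x y\<close>.\<close>
lemma imh_acc_mult_exp_dens: "imh_acc a1 a2 x y * exp_dens a2 y = exp_dens a1 y * dens_ratio (max x y)"
proof -
  have "imh_w a1 a2 z = 1 / dens_ratio z" for z
    by (simp add: imh_w_def dens_ratio_def)
  then have "imh_acc a1 a2 x y * exp_dens a2 y = min 1 (dens_ratio x / dens_ratio y) * (exp_dens a1 y * dens_ratio y)"
    by (simp add: imh_acc_def exp_dens_mult_dens_ratio)
  also have "\<dots> = exp_dens a1 y * min (dens_ratio y) (dens_ratio x)"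
    using dens_ratio_pos[of y] dens1_pos[of y] by (simp add: min_def field_simps)
  also have "min (dens_ratio y) (dens_ratio x) = dens_ratio (max x y)"
    using dens_ratio_antimono[of x y] dens_ratio_antimono[of y x] by (auto simp: min_def max_def)
  finally show ?thesis .
qed

definition accept_op :: "(real \<Rightarrow> real) \<Rightarrow> real \<Rightarrow> real" where
  "accept_op u x = (LINT y:{0<..}|lborel. exp_dens a1 y * (dens_ratio (max x y) * u y))"

lemma imh_P_eq: "P u x = accept_op u x + \<rho> x * u x"
  by (simp add: imh_P_def accept_op_def imh_acc_mult_exp_dens mult.assoc)

definition accept_prob :: "real \<Rightarrow> real" where
  "accept_prob x = dens_ratio x * exp_cdf a1 x + exp (- a2 * x)"

lemma bdd_on_pos_dens_ratio_max: "bdd_on_pos (a2 / a1) (\<lambda>y. dens_ratio (max x y))"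
  using dens_ratio_pos by (intro bdd_on_posI) (auto intro!: dens_ratio_le simp: less_imp_le)

lemma set_integrable_accept_kernel:
  "set_integrable lborel {0<..} (\<lambda>y. exp_dens a1 y * dens_ratio (max x y))"
  by (rule set_integrable_exp_dens_mult[OF a1_pos bdd_on_pos_dens_ratio_max]) auto

lemma accept_kernel_integral:
  assumes "0 \<le> x"
  shows "(LINT y:{0<..}|lborel. exp_dens a1 y * dens_ratio (max x y)) = accept_prob x"
proof -
  have "(LINT y:{0<..}|lborel. exp_dens a1 y * dens_ratio (max x y))
      = (LINT y:{0<..x}|lborel. dens_ratio x * exp_dens a1 y) + (LINT y:{x<..}|lborel. exp_dens a2 y)"
    unfolding set_integral_Ioi_split[OF set_integrable_accept_kernel assms]
    by (intro arg_cong2[where f="(+)"] set_lebesgue_integral_cong)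
       (auto simp: max_def mult.commute exp_dens_mult_dens_ratio)
  then show ?thesis
    using assms by (simp add: set_integral_exp_dens_Ioc[OF a1_pos] exp_dens_Ioi[OF a2_pos] accept_prob_def)
qed

lemma imh_rho_eq: "0 \<le> x \<Longrightarrow> \<rho> x = 1 - accept_prob x"
  by (simp add: imh_rho_def imh_acc_mult_exp_dens accept_kernel_integral)

lemma exp_le_accept_prob:
  assumes "0 \<le> x"
  shows "exp (- (a2 - a1) * x) \<le> accept_prob x"
proof -
  have "exp (- (a2 - a1) * x) = exp (- (a2 - a1) * x) * exp_cdf a1 x + exp (- a2 * x)"
    by (simp add: exp_cdf_def algebra_simps exp_add[symmetric])
  also have "\<dots> \<le> dens_ratio x * exp_cdf a1 x + exp (- a2 * x)"
    using assms a1_pos exp_le_dens_ratio[of x]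
    by (intro add_right_mono mult_right_mono) (auto simp: exp_cdf_def)
  finally show ?thesis by (simp add: accept_prob_def)
qed

lemma accept_prob_pos:
  assumes "0 \<le> x"
  shows "0 < accept_prob x"
  using exp_le_accept_prob[OF assms] exp_gt_zero[of "- (a2 - a1) * x"] by linarith

lemma accept_prob_le_1:
  assumes "0 \<le> x"
  shows "accept_prob x \<le> 1"
proof -
  have "accept_prob x \<le> (LINT y:{0<..}|lborel. exp_dens a2 y)"
    unfolding accept_kernel_integral[OF assms, symmetric]
  proof (rule set_integral_mono[OF set_integrable_accept_kernel exp_dens_Ioi(1)[OF a2_pos]])
    show "exp_dens a1 y * dens_ratio (max x y) \<le> exp_dens a2 y" if "y \<in> {0<..}" for y
      using dens_ratio_antimono[of y "max x y"] dens1_pos[of y]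
      by (simp add: exp_dens_mult_dens_ratio[symmetric] mult_left_mono)
  qed
  then show ?thesis using exp_dens_Ioi(2)[OF a2_pos, of 0] by simp
qed

lemma imh_rho_nonneg: "0 \<le> x \<Longrightarrow> 0 \<le> \<rho> x"
  using accept_prob_le_1 imh_rho_eq by simp

lemma imh_rho_le: "0 \<le> x \<Longrightarrow> \<rho> x \<le> 1 - exp (- (a2 - a1) * x)"
  using exp_le_accept_prob imh_rho_eq by simp

lemma imh_rho_le_1: "0 \<le> x \<Longrightarrow> \<rho> x \<le> 1"
  using accept_prob_pos imh_rho_eq by (simp add: less_imp_le)

lemma imh_rho_le_exp_cdf:
  assumes "0 \<le> x"
  shows "\<rho> x \<le> a2 / a1 * exp_cdf a1 x"
proof -
  have "\<rho> x \<le> exp_cdf a2 x"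
    using assms dens_ratio_pos[of x] exp_cdf_pos[OF a1_pos, of x]
    by (cases "x = 0") (auto simp: imh_rho_eq accept_prob_def exp_cdf_def)
  also have "\<dots> = (LINT y:{0<..x}|lborel. exp_dens a2 y)"
    using set_integral_exp_dens_Ioc[OF a2_pos assms] by simp
  also have "\<dots> \<le> (LINT y:{0<..x}|lborel. a2 / a1 * exp_dens a1 y)"
  proof (rule set_integral_mono)
    show "set_integrable lborel {0<..x} (exp_dens a2)"
      by (rule set_integrable_subset[OF exp_dens_Ioi(1)[OF a2_pos, of 0]]) auto
    show "set_integrable lborel {0<..x} (\<lambda>y. a2 / a1 * exp_dens a1 y)"
      by (intro set_integrable_mult_right set_integrable_subset[OF exp_dens_Ioi(1)[OF a1_pos, of 0]]) auto
    show "exp_dens a2 y \<le> a2 / a1 * exp_dens a1 y" if "y \<in> {0<..x}" for y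
      using that a1_pos a1_less_a2 by (simp add: exp_dens_def mult_right_mono)
  qed
  also have "\<dots> = a2 / a1 * exp_cdf a1 x"
    using set_integral_exp_dens_Ioc[OF a1_pos assms] by simp
  finally show ?thesis .
qed

lemma imh_rho_measurable [measurable]: "\<rho> \<in> borel_measurable borel"
  unfolding imh_rho_def[abs_def] imh_acc_def imh_w_def set_lebesgue_integral_def by measurable

lemma accept_prob_measurable [measurable]: "accept_prob \<in> borel_measurable borel"
  unfolding accept_prob_def[abs_def] by measurable

lemma accept_op_measurable [measurable]:
  assumes [measurable]: "u \<in> borel_measurable borel"
  shows "accept_op u \<in> borel_measurable borel"
  unfolding accept_op_def[abs_def] set_lebesgue_integral_def by measurable

lemma imh_P_measurable [measurable]:
  assumes [measurable]: "u \<in> borel_measurable borel"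
  shows "P u \<in> borel_measurable borel"
proof -
  have "P u = (\<lambda>x. accept_op u x + \<rho> x * u x)" by (simp add: imh_P_eq fun_eq_iff)
  then show ?thesis by simp
qed

lemma imh_P_funpow_measurable:
  "u \<in> borel_measurable borel \<Longrightarrow> (P ^^ n) u \<in> borel_measurable borel"
  by (induction n) simp_all

lemma bdd_on_pos_imh_rho: "bdd_on_pos 1 \<rho>"
  using imh_rho_nonneg imh_rho_le_1 by (intro bdd_on_posI) (auto simp: less_imp_le)

lemma bdd_on_pos_accept_prob: "bdd_on_pos 1 accept_prob"
proof (rule bdd_on_posI)
  show "\<bar>accept_prob x\<bar> \<le> 1" if "0 < x" for x
    using accept_prob_pos[of x] accept_prob_le_1[of x] that by simp
qed simp

lemma abs_accept_op_le:
  assumes "bdd_on_pos B u" "0 < x"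
  shows "\<bar>accept_op u x\<bar> \<le> B * accept_prob x"
proof -
  have "\<bar>accept_op u x\<bar> \<le> (LINT y:{0<..}|lborel. exp_dens a1 y * dens_ratio (max x y) * B)"
    unfolding accept_op_def
  proof (rule abs_set_integral_le)
    show "set_integrable lborel {0<..} (\<lambda>y. exp_dens a1 y * dens_ratio (max x y) * B)"
      using set_integrable_accept_kernel by simp
    show "\<bar>exp_dens a1 y * (dens_ratio (max x y) * u y)\<bar> \<le> exp_dens a1 y * dens_ratio (max x y) * B"
      if "y \<in> {0<..}" for y
      using that bdd_on_pos_bound[OF assms(1)] dens1_pos[of y] dens_ratio_pos[of "max x y"]
      by (simp add: abs_mult mult_left_mono)
  qed
  also have "\<dots> = B * accept_prob x"
    using accept_kernel_integral[of x] assms(2) by simp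
  finally show ?thesis .
qed

lemma bdd_on_pos_accept_op:
  assumes "bdd_on_pos B u"
  shows "bdd_on_pos B (accept_op u)"
proof (rule bdd_on_posI)
  show "accept_op u \<in> borel_measurable borel"
    using bdd_on_pos_measurable[OF assms] by simp
  show "\<bar>accept_op u x\<bar> \<le> B" if "0 < x" for x
    using abs_accept_op_le[OF assms that] accept_prob_le_1[of x] bdd_on_pos_nonneg[OF assms] that
    by (smt (verit) mult_left_le)
qed

lemma bdd_on_pos_imh_P:
  assumes "bdd_on_pos B u"
  shows "bdd_on_pos B (P u)"
proof (rule bdd_on_posI)
  show "P u \<in> borel_measurable borel"
    using bdd_on_pos_measurable[OF assms] by simp
  show "\<bar>P u x\<bar> \<le> B" if x: "0 < x" for x
  proof -
    have "\<bar>P u x\<bar> \<le> B * accept_prob x + \<rho> x * B"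
      unfolding imh_P_eq using abs_accept_op_le[OF assms x] bdd_on_pos_bound[OF assms x] imh_rho_nonneg[of x] x
      by (simp add: abs_mult abs_triangle_ineq[THEN order_trans] mult_left_mono add_mono)
    then show ?thesis using x by (simp add: imh_rho_eq algebra_simps)
  qed
qed

lemma bdd_on_pos_imh_P_funpow: "bdd_on_pos B u \<Longrightarrow> bdd_on_pos B ((P ^^ n) u)"
  by (induction n) (simp_all add: bdd_on_pos_imh_P)

lemma set_integral_accept_op:
  assumes u: "bdd_on_pos B u" and [measurable]: "A \<in> sets borel" and A: "A \<subseteq> {0<..}"
  shows "(LINT x:A|lborel. exp_dens a1 x * accept_op u x) =
    (LINT y:{0<..}|lborel. exp_dens a1 y * ((LINT x:A|lborel. exp_dens a1 x * dens_ratio (max x y)) * u y))"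
proof -
  have [measurable]: "u \<in> borel_measurable borel" using u by (rule bdd_on_pos_measurable)
  define F where "F x y = indicator A x * exp_dens a1 x * (indicator {0<..} y * (exp_dens a1 y * (dens_ratio (max x y) * u y)))" for x y
  have lhs: "(LINT x:A|lborel. exp_dens a1 x * accept_op u x) = (\<integral>x. (\<integral>y. F x y \<partial>lborel) \<partial>lborel)"
    unfolding set_lebesgue_integral_def accept_op_def F_def by (simp add: mult.assoc)
  have "F x y = (indicator {0<..} y * (exp_dens a1 y * u y)) * (indicator A x * (exp_dens a1 x * dens_ratio (max x y)))"
    for x y unfolding F_def by (simp add: ac_simps)
  then have rhs: "(LINT y:{0<..}|lborel. exp_dens a1 y * ((LINT x:A|lborel. exp_dens a1 x * dens_ratio (max x y)) * u y))
      = (\<integral>y. (\<integral>x. F x y \<partial>lborel) \<partial>lborel)"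
    unfolding set_lebesgue_integral_def
    by (simp only: integral_mult_right_zero real_scaleR_def) (simp add: ac_simps)
  define g where "g x = indicator {0<..} x * exp_dens a1 x" for x
  define c where "c = a2 / a1 * B"
  have g: "integrable lborel g" "0 \<le> g x" for x
    using exp_dens_Ioi(1)[OF a1_pos, of 0] dens1_pos[of x] by (simp_all add: g_def[abs_def] set_integrable_def)
  have c: "0 \<le> c" using a1_pos a2_pos bdd_on_pos_nonneg[OF u] by (simp add: c_def)
  have "\<bar>F x y\<bar> \<le> g x * (c * g y)" for x y
  proof (cases "x \<in> A \<and> 0 < y")
    case True
    then have "0 < x" using A by auto
    have "\<bar>dens_ratio (max x y) * u y\<bar> \<le> c"
      using True bdd_on_pos_bound[OF bdd_on_pos_mult[OF bdd_on_pos_dens_ratio_max u], of y] by (simp add: c_def)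
    then have "exp_dens a1 x * (exp_dens a1 y * \<bar>dens_ratio (max x y) * u y\<bar>) \<le> exp_dens a1 x * (exp_dens a1 y * c)"
      using dens1_pos[of x] dens1_pos[of y] by (intro mult_left_mono) auto
    then show ?thesis
      using True \<open>0 < x\<close> dens1_pos[of x] dens1_pos[of y] by (simp add: F_def g_def abs_mult ac_simps)
  qed (use g c in \<open>auto simp: F_def\<close>)
  then have "(\<integral>x. (\<integral>y. F x y \<partial>lborel) \<partial>lborel) = (\<integral>y. (\<integral>x. F x y \<partial>lborel) \<partial>lborel)"
    using g c by (intro integral_swap_product_bound[where g=g and h="\<lambda>y. c * g y"])
      (simp_all add: F_def)
  then show ?thesis using lhs rhs by simp
qed

lemma accept_kernel_integral_Ioi:
  "0 < y \<Longrightarrow> (LINT x:{0<..}|lborel. exp_dens a1 x * dens_ratio (max x y)) = accept_prob y"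
  using accept_kernel_integral[of y] by (simp add: max.commute)

definition accept_kernel_Ioc :: "real \<Rightarrow> real \<Rightarrow> real" where
  "accept_kernel_Ioc t y = (if y \<le> t then accept_prob y - exp (- a2 * t) else dens_ratio y * exp_cdf a1 t)"

lemma accept_kernel_integral_Ioc:
  assumes "0 < t" "0 < y"
  shows "(LINT x:{0<..t}|lborel. exp_dens a1 x * dens_ratio (max x y))
    = accept_kernel_Ioc t y"
proof (cases "y \<le> t")
  case True
  have int: "set_integrable lborel {0<..} (\<lambda>x. exp_dens a1 x * dens_ratio (max x y))"
    using set_integrable_accept_kernel[of y] by (simp add: max.commute)
  have "(LINT x:{t<..}|lborel. exp_dens a1 x * dens_ratio (max x y)) = (LINT x:{t<..}|lborel. exp_dens a2 x)"
    using True by (intro set_lebesgue_integral_cong) (auto simp: exp_dens_mult_dens_ratio max_def)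
  then show ?thesis
    using set_integral_Ioi_split[OF int, of t] accept_kernel_integral_Ioi[OF assms(2)] True assms(1)
    by (simp add: exp_dens_Ioi[OF a2_pos] accept_kernel_Ioc_def)
next
  case False
  have "(LINT x:{0<..t}|lborel. exp_dens a1 x * dens_ratio (max x y)) = (LINT x:{0<..t}|lborel. dens_ratio y * exp_dens a1 x)"
    using False by (intro set_lebesgue_integral_cong) (auto simp: max_def)
  then show ?thesis
    using False assms(1) by (simp add: set_integral_exp_dens_Ioc[OF a1_pos] accept_kernel_Ioc_def)
qed


lemma bdd_on_pos_accept_kernel_Ioc:
  assumes t: "0 < t"
  shows "bdd_on_pos (1 + a2 / a1) (accept_kernel_Ioc t)"
proof (rule bdd_on_posI)
  show "accept_kernel_Ioc t \<in> borel_measurable borel" unfolding accept_kernel_Ioc_def by measurable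
  show "\<bar>accept_kernel_Ioc t y\<bar> \<le> 1 + a2 / a1" if y: "0 < y" for y
  proof (cases "y \<le> t")
    case True
    have "0 < exp (- a2 * t)" "exp (- a2 * t) \<le> 1" using a2_pos t by auto
    then have "\<bar>accept_prob y - exp (- a2 * t)\<bar> \<le> 1"
      unfolding abs_le_iff using accept_prob_pos[of y] accept_prob_le_1[of y] y by (intro conjI; linarith)
    moreover have "0 \<le> a2 / a1" using a1_pos a2_pos by simp
    ultimately show ?thesis using True by (simp add: accept_kernel_Ioc_def)
  next
    case False
    have "dens_ratio y * exp_cdf a1 t \<le> a2 / a1 * 1"
      using y dens_ratio_le[of y] dens_ratio_pos[of y] exp_cdf_pos[OF a1_pos t] exp_cdf_le_1[of a1 t]
      by (intro mult_mono) auto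
    then show ?thesis
      using False dens_ratio_pos[of y] exp_cdf_pos[OF a1_pos t] by (simp add: accept_kernel_Ioc_def)
  qed
qed

lemma set_integral_exp_dens_imh_P:
  assumes u: "bdd_on_pos B u" and A: "A \<in> sets borel" "A \<subseteq> {0<..}"
  shows "(LINT x:A|lborel. exp_dens a1 x * P u x) =
    (LINT y:{0<..}|lborel. exp_dens a1 y * ((LINT x:A|lborel. exp_dens a1 x * dens_ratio (max x y)) * u y))
    + (LINT x:A|lborel. exp_dens a1 x * (\<rho> x * u x))"
proof -
  have "(LINT x:A|lborel. exp_dens a1 x * P u x)
      = (LINT x:A|lborel. exp_dens a1 x * accept_op u x + exp_dens a1 x * (\<rho> x * u x))"
    by (simp add: imh_P_eq distrib_left)
  also have "\<dots> = (LINT x:A|lborel. exp_dens a1 x * accept_op u x) + (LINT x:A|lborel. exp_dens a1 x * (\<rho> x * u x))"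
    using A u bdd_on_pos_accept_op[OF u] bdd_on_pos_mult[OF bdd_on_pos_imh_rho u]
    by (intro set_integral_add(2) set_integrable_exp_dens_mult[OF a1_pos])
  finally show ?thesis by (simp only: set_integral_accept_op[OF u A])
qed

lemma set_integral_imh_P:
  assumes u: "bdd_on_pos B u"
  shows "(LINT x:{0<..}|lborel. exp_dens a1 x * P u x) = (LINT x:{0<..}|lborel. exp_dens a1 x * u x)"
proof -
  have "(LINT x:{0<..}|lborel. exp_dens a1 x * P u x)
      = (LINT y:{0<..}|lborel. exp_dens a1 y * (accept_prob y * u y)) + (LINT x:{0<..}|lborel. exp_dens a1 x * (\<rho> x * u x))"
    unfolding set_integral_exp_dens_imh_P[OF u greaterThan_borel order_refl]
    by (simp add: set_lebesgue_integral_cong accept_kernel_integral_Ioi)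
  also have "\<dots> = (LINT x:{0<..}|lborel. exp_dens a1 x * (accept_prob x * u x) + exp_dens a1 x * (\<rho> x * u x))"
    using bdd_on_pos_mult[OF bdd_on_pos_imh_rho u] bdd_on_pos_mult[OF bdd_on_pos_accept_prob u]
    by (intro set_integral_add(2)[symmetric] set_integrable_exp_dens_mult[OF a1_pos]) auto
  also have "\<dots> = (LINT x:{0<..}|lborel. exp_dens a1 x * u x)"
    by (intro set_lebesgue_integral_cong) (auto simp: imh_rho_eq algebra_simps)
  finally show ?thesis .
qed

lemma set_integral_imh_P_funpow:
  assumes "bdd_on_pos B u"
  shows "(LINT x:{0<..}|lborel. exp_dens a1 x * (P ^^ n) u x) = (LINT x:{0<..}|lborel. exp_dens a1 x * u x)"
proof (induction n)
  case (Suc n)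
  then show ?case using set_integral_imh_P[OF bdd_on_pos_imh_P_funpow[OF assms, of n]] by simp
qed simp

section \<open>Deviation from the mean below \<open>t\<close>\<close>

definition lower_int :: "(real \<Rightarrow> real) \<Rightarrow> real \<Rightarrow> real" where
  "lower_int u t = (LINT y:{0<..t}|lborel. exp_dens a1 y * u y)"

definition upper_int :: "(real \<Rightarrow> real) \<Rightarrow> real \<Rightarrow> real" where
  "upper_int u t = (LINT y:{t<..}|lborel. exp_dens a2 y * u y)"

lemma imh_P_split:
  assumes u: "bdd_on_pos B u" and t: "0 < t"
  shows "P u t = \<rho> t * u t + dens_ratio t * lower_int u t + upper_int u t"
proof -
  have int: "set_integrable lborel {0<..} (\<lambda>y. exp_dens a1 y * (dens_ratio (max t y) * u y))"
    by (rule set_integrable_exp_dens_mult[OF a1_pos bdd_on_pos_mult[OF bdd_on_pos_dens_ratio_max u]]) auto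
  have "(LINT y:{0<..t}|lborel. exp_dens a1 y * (dens_ratio (max t y) * u y))
      = (LINT y:{0<..t}|lborel. dens_ratio t * (exp_dens a1 y * u y))"
    by (intro set_lebesgue_integral_cong) (auto simp: max_def)
  then have "(LINT y:{0<..t}|lborel. exp_dens a1 y * (dens_ratio (max t y) * u y)) = dens_ratio t * lower_int u t"
    by (simp add: lower_int_def)
  moreover have "(LINT y:{t<..}|lborel. exp_dens a1 y * (dens_ratio (max t y) * u y)) = upper_int u t"
    unfolding upper_int_def
    by (intro set_lebesgue_integral_cong) (auto simp: max_def exp_dens_mult_dens_ratio[symmetric] ac_simps)
  ultimately show ?thesis
    using set_integral_Ioi_split[OF int less_imp_le[OF t]] by (simp add: imh_P_eq accept_op_def)
qed

lemma lower_int_imh_P: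
  assumes u: "bdd_on_pos B u" and t: "0 < t"
  shows "lower_int (P u) t = exp_cdf a2 t * lower_int u t + exp_cdf a1 t * upper_int u t"
proof -
  let ?W = "accept_kernel_Ioc t"
  have intW: "set_integrable lborel {0<..} (\<lambda>y. exp_dens a1 y * (?W y * u y))"
    by (intro set_integrable_exp_dens_mult[OF a1_pos bdd_on_pos_mult[OF bdd_on_pos_accept_kernel_Ioc[OF t] u]]) auto
  have int\<rho>: "set_integrable lborel {0<..t} (\<lambda>y. exp_dens a1 y * (\<rho> y * u y))"
    by (intro set_integrable_exp_dens_mult[OF a1_pos bdd_on_pos_mult[OF bdd_on_pos_imh_rho u]]) auto
  have sub: "{0<..t} \<subseteq> {0<..}" by auto
  have "lower_int (P u) t = (LINT y:{0<..}|lborel. exp_dens a1 y * (?W y * u y))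
      + (LINT y:{0<..t}|lborel. exp_dens a1 y * (\<rho> y * u y))"
    unfolding lower_int_def set_integral_exp_dens_imh_P[OF u greaterThanAtMost_borel sub]
    by (simp add: set_lebesgue_integral_cong accept_kernel_integral_Ioc[OF t])
  also have "(LINT y:{0<..}|lborel. exp_dens a1 y * (?W y * u y))
      = (LINT y:{0<..t}|lborel. exp_dens a1 y * (?W y * u y)) + exp_cdf a1 t * upper_int u t"
  proof -
    have "(LINT y:{t<..}|lborel. exp_dens a1 y * (?W y * u y))
        = (LINT y:{t<..}|lborel. exp_cdf a1 t * (exp_dens a2 y * u y))"
      by (intro set_lebesgue_integral_cong)
        (auto simp: accept_kernel_Ioc_def exp_dens_mult_dens_ratio[symmetric] ac_simps)
    then show ?thesis
      unfolding set_integral_Ioi_split[OF intW less_imp_le[OF t]] upper_int_def by simp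
  qed
  also have "(LINT y:{0<..t}|lborel. exp_dens a1 y * (?W y * u y)) + exp_cdf a1 t * upper_int u t
        + (LINT y:{0<..t}|lborel. exp_dens a1 y * (\<rho> y * u y))
      = (LINT y:{0<..t}|lborel. exp_dens a1 y * (?W y * u y) + exp_dens a1 y * (\<rho> y * u y))
        + exp_cdf a1 t * upper_int u t"
    using set_integrable_subset[OF intW _ sub] int\<rho> by (simp add: set_integral_add)
  also have "(LINT y:{0<..t}|lborel. exp_dens a1 y * (?W y * u y) + exp_dens a1 y * (\<rho> y * u y))
      = (LINT y:{0<..t}|lborel. exp_cdf a2 t * (exp_dens a1 y * u y))"
    by (intro set_lebesgue_integral_cong) (auto simp: accept_kernel_Ioc_def imh_rho_eq exp_cdf_def algebra_simps)
  finally show ?thesis by (simp add: lower_int_def)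
qed

lemma lower_int_measurable [measurable]:
  assumes [measurable]: "u \<in> borel_measurable borel"
  shows "lower_int u \<in> borel_measurable borel"
proof -
  have "lower_int u = (\<lambda>s. \<integral>y. (if 0 < y \<and> y \<le> s then exp_dens a1 y * u y else 0) \<partial>lborel)"
    unfolding lower_int_def set_lebesgue_integral_def
    by (intro ext Bochner_Integration.integral_cong) (auto split: split_indicator)
  then show ?thesis by simp
qed

lemma lower_int_bounds:
  assumes u: "u \<in> borel_measurable borel" "\<And>x. 0 < x \<Longrightarrow> u x \<in> {lo..hi}" and t: "0 < t"
  shows "lo * exp_cdf a1 t \<le> lower_int u t" "lower_int u t \<le> hi * exp_cdf a1 t"
proof -
  have int: "set_integrable lborel {0<..t} (\<lambda>y. exp_dens a1 y * u y)"
    by (rule set_integrable_exp_dens_mult[OF a1_pos bdd_on_pos_interval[OF u]]) auto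
  have "set_integrable lborel {0<..t} (\<lambda>y. c * exp_dens a1 y)" for c
    by (intro set_integrable_mult_right set_integrable_subset[OF exp_dens_Ioi(1)[OF a1_pos, of 0]]) auto
  moreover have "(LINT y:{0<..t}|lborel. c * exp_dens a1 y) = c * exp_cdf a1 t" for c
    using set_integral_exp_dens_Ioc[OF a1_pos less_imp_le[OF t]] by simp
  ultimately show "lo * exp_cdf a1 t \<le> lower_int u t" "lower_int u t \<le> hi * exp_cdf a1 t"
    unfolding lower_int_def using u(2) dens1_pos
    by (metis (no_types, lifting) set_integral_mono[OF _ int] set_integral_mono[OF int] mult_right_mono
        mult.commute atLeastAtMost_iff greaterThanAtMost_iff less_imp_le)+
qed

definition dev_below :: "(real \<Rightarrow> real) \<Rightarrow> real \<Rightarrow> real" where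
  "dev_below u t = u t - lower_int u t / exp_cdf a1 t"

lemma abs_dev_below_le:
  assumes "u \<in> borel_measurable borel" "\<And>x. 0 < x \<Longrightarrow> u x \<in> {lo..hi}" and t: "0 < t"
  shows "\<bar>dev_below u t\<bar> \<le> hi - lo"
proof -
  have "lo \<le> lower_int u t / exp_cdf a1 t" "lower_int u t / exp_cdf a1 t \<le> hi"
    using lower_int_bounds[OF assms] exp_cdf_pos[OF a1_pos t] by (simp_all add: field_simps)
  then show ?thesis using assms(2)[OF t] by (simp add: dev_below_def abs_le_iff)
qed

lemma dev_below_imh_P:
  assumes "bdd_on_pos B u" "0 < t"
  shows "dev_below (P u) t = \<rho> t * dev_below u t"
proof -
  have "exp_cdf a1 t \<noteq> 0" using exp_cdf_pos[OF a1_pos assms(2)] by simp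
  then show ?thesis
    unfolding dev_below_def lower_int_imh_P[OF assms] imh_P_split[OF assms] imh_rho_eq[OF less_imp_le[OF assms(2)]]
    by (simp add: accept_prob_def exp_cdf_def[of a2] field_simps)
qed

lemma dev_below_imh_P_funpow:
  assumes "bdd_on_pos B u" "0 < t"
  shows "dev_below ((P ^^ n) u) t = \<rho> t ^ n * dev_below u t"
  by (induction n) (simp_all add: dev_below_imh_P[OF bdd_on_pos_imh_P_funpow[OF assms(1)] assms(2)])

lemma abs_lower_int_le:
  assumes "bdd_on_pos B u" "0 < t"
  shows "\<bar>lower_int u t\<bar> \<le> B * exp_cdf a1 t"
  using lower_int_bounds[of u "- B" B t] bdd_on_pos_measurable[OF assms(1)] bdd_on_pos_bound[OF assms(1)] assms(2)
  by (force simp: abs_le_iff)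

lemma set_integral_lower_int_weighted:
  assumes u: "bdd_on_pos B u" and t: "0 < t"
  shows "(LINT s:{t<..}|lborel. exp_dens a1 s / exp_cdf a1 s ^ 2 * lower_int u s)
    = (LINT r:{0<..}|lborel. exp_dens a1 r * ((1 / exp_cdf a1 (max r t) - 1) * u r))"
proof -
  have [measurable]: "u \<in> borel_measurable borel" using u by (rule bdd_on_pos_measurable)
  define w where "w s = indicator {t<..} s * (exp_dens a1 s / exp_cdf a1 s ^ 2)" for s
  define F where "F s r = w s * (indicator {0<..s} r * (exp_dens a1 r * u r))" for s r
  have tail: "(\<integral>s. indicator {r..} s * w s \<partial>lborel) = 1 / exp_cdf a1 (max r t) - 1" if "0 < r" for r
    using integral_Ici_exp_dens_div_exp_cdf_sq[OF a1_pos that t] by (simp add: w_def)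
  have lhs: "(LINT s:{t<..}|lborel. exp_dens a1 s / exp_cdf a1 s ^ 2 * lower_int u s)
      = (\<integral>s. (\<integral>r. F s r \<partial>lborel) \<partial>lborel)"
    unfolding F_def lower_int_def set_lebesgue_integral_def
    by (simp only: integral_mult_right_zero real_scaleR_def) (simp add: w_def ac_simps)
  have "F s r = (indicator {0<..} r * (exp_dens a1 r * u r)) * (indicator {r..} s * w s)" for s r
    unfolding F_def by (simp add: indicator_def)
  then have "(\<integral>s. F s r \<partial>lborel) = (indicator {0<..} r * (exp_dens a1 r * u r)) * (\<integral>s. indicator {r..} s * w s \<partial>lborel)" for r
    by (simp only: integral_mult_right_zero)
  then have "(\<integral>s. F s r \<partial>lborel) = indicator {0<..} r * (exp_dens a1 r * ((1 / exp_cdf a1 (max r t) - 1) * u r))" for r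
    by (cases "0 < r") (simp_all add: tail)
  then have rhs: "(LINT r:{0<..}|lborel. exp_dens a1 r * ((1 / exp_cdf a1 (max r t) - 1) * u r))
      = (\<integral>r. (\<integral>s. F s r \<partial>lborel) \<partial>lborel)"
    by (simp add: set_lebesgue_integral_def)
  define g where "g s = indicator {0<..} s * exp_dens a1 s" for s
  have g: "integrable lborel g" "0 \<le> g s" for s
    using exp_dens_Ioi(1)[OF a1_pos, of 0] dens1_pos[of s] by (simp_all add: g_def[abs_def] set_integrable_def)
  have \<Pi>t: "0 < exp_cdf a1 t" using exp_cdf_pos[OF a1_pos t] .
  have bound: "\<bar>F s r\<bar> \<le> (g s / exp_cdf a1 t ^ 2) * (B * g r)" for s r
  proof (cases "t < s \<and> 0 < r \<and> r \<le> s")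
    case True
    have "exp_cdf a1 t \<le> exp_cdf a1 s" using True a1_pos by (intro exp_cdf_mono) auto
    then have "exp_dens a1 s / exp_cdf a1 s ^ 2 \<le> exp_dens a1 s / exp_cdf a1 t ^ 2"
      using \<Pi>t dens1_pos[of s] by (intro divide_left_mono power_mono mult_pos_pos) auto
    moreover have "\<bar>u r\<bar> \<le> B" using True bdd_on_pos_bound[OF u] by simp
    ultimately have "exp_dens a1 s / exp_cdf a1 s ^ 2 * (exp_dens a1 r * \<bar>u r\<bar>) \<le> exp_dens a1 s / exp_cdf a1 t ^ 2 * (exp_dens a1 r * B)"
      using dens1_pos[of r] dens1_pos[of s] \<Pi>t by (intro mult_mono mult_left_mono) auto
    then show ?thesis
      using True t dens1_pos[of r] dens1_pos[of s] by (simp add: F_def w_def g_def abs_mult ac_simps)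
  qed (use g \<Pi>t bdd_on_pos_nonneg[OF u] in \<open>auto simp: F_def w_def\<close>)
  have "case_prod F = (\<lambda>(s, r). if t < s \<and> 0 < r \<and> r \<le> s
      then exp_dens a1 s / exp_cdf a1 s ^ 2 * (exp_dens a1 r * u r) else 0)"
    by (auto simp: F_def w_def fun_eq_iff split: split_indicator)
  then have "case_prod F \<in> borel_measurable (lborel \<Otimes>\<^sub>M lborel)" by simp
  then have "(\<integral>s. (\<integral>r. F s r \<partial>lborel) \<partial>lborel) = (\<integral>r. (\<integral>s. F s r \<partial>lborel) \<partial>lborel)"
  proof (rule integral_swap_product_bound[OF _ _ _ _ _ bound])
  qed (use g \<Pi>t bdd_on_pos_nonneg[OF u] in simp_all)
  then show ?thesis using lhs rhs by simp
qed

lemma set_integrable_div_exp_cdf: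
  assumes u: "bdd_on_pos B u" and t: "0 < t"
  shows "set_integrable lborel {t<..} (\<lambda>s. exp_dens a1 s * (u s / exp_cdf a1 s))"
proof -
  have [measurable]: "u \<in> borel_measurable borel" using u by (rule bdd_on_pos_measurable)
  have \<Pi>t: "0 < exp_cdf a1 t" using exp_cdf_pos[OF a1_pos t] .
  show ?thesis
  proof (rule set_integrable_exp_dens_bound[OF a1_pos, where C="B / exp_cdf a1 t"])
    show "\<bar>exp_dens a1 s * (u s / exp_cdf a1 s)\<bar> \<le> B / exp_cdf a1 t * exp_dens a1 s" if "t < s" for s
    proof -
      have "exp_cdf a1 t \<le> exp_cdf a1 s" using that a1_pos by (intro exp_cdf_mono) auto
      then have "\<bar>u s\<bar> / exp_cdf a1 s \<le> B / exp_cdf a1 t"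
        using that t \<Pi>t bdd_on_pos_bound[OF u, of s] bdd_on_pos_nonneg[OF u] by (intro frac_le) auto
      then have "exp_dens a1 s * (\<bar>u s\<bar> / exp_cdf a1 s) \<le> exp_dens a1 s * (B / exp_cdf a1 t)"
        using dens1_pos[of s] by (intro mult_left_mono) auto
      then show ?thesis
        using dens1_pos[of s] exp_cdf_pos[OF a1_pos, of s] that t by (simp add: abs_mult ac_simps)
    qed
  qed measurable
qed

lemma set_integral_lower_int_weighted_eq:
  assumes u: "bdd_on_pos B u" and t: "0 < t"
  shows "(LINT s:{t<..}|lborel. exp_dens a1 s / exp_cdf a1 s ^ 2 * lower_int u s)
    = lower_int u t / exp_cdf a1 t + (LINT s:{t<..}|lborel. exp_dens a1 s * (u s / exp_cdf a1 s))
      - (LINT x:{0<..}|lborel. exp_dens a1 x * u x)"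
proof -
  have [measurable]: "u \<in> borel_measurable borel" using u by (rule bdd_on_pos_measurable)
  have \<Pi>t: "0 < exp_cdf a1 t" using exp_cdf_pos[OF a1_pos t] .
  define g where "g r = 1 / exp_cdf a1 (max r t) - 1" for r
  have "bdd_on_pos (1 / exp_cdf a1 t) g"
    unfolding g_def[abs_def] by (rule bdd_on_pos_inv_exp_cdf_max[OF a1_pos t])
  then have int_g: "set_integrable lborel {0<..} (\<lambda>r. exp_dens a1 r * (g r * u r))"
    by (intro set_integrable_exp_dens_mult[OF a1_pos bdd_on_pos_mult[OF _ u]]) auto
  have int_u: "set_integrable lborel {0<..} (\<lambda>r. exp_dens a1 r * u r)"
    by (intro set_integrable_exp_dens_mult[OF a1_pos u]) auto
  have int_u': "set_integrable lborel {t<..} (\<lambda>r. exp_dens a1 r * u r)"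
    using t by (intro set_integrable_exp_dens_mult[OF a1_pos u]) auto
  have int_div: "set_integrable lborel {t<..} (\<lambda>s. exp_dens a1 s * (u s / exp_cdf a1 s))"
    by (rule set_integrable_div_exp_cdf[OF u t])
  have I0: "(LINT r:{0<..t}|lborel. exp_dens a1 r * (g r * u r)) = (1 / exp_cdf a1 t - 1) * lower_int u t"
  proof -
    have "(LINT r:{0<..t}|lborel. exp_dens a1 r * (g r * u r)) = (LINT r:{0<..t}|lborel. (1 / exp_cdf a1 t - 1) * (exp_dens a1 r * u r))"
      by (intro set_lebesgue_integral_cong) (auto simp: g_def max_def)
    then show ?thesis by (simp add: lower_int_def)
  qed
  have I1: "(LINT r:{t<..}|lborel. exp_dens a1 r * (g r * u r))
      = (LINT r:{t<..}|lborel. exp_dens a1 r * (u r / exp_cdf a1 r)) - (LINT r:{t<..}|lborel. exp_dens a1 r * u r)"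
  proof -
    have "(LINT r:{t<..}|lborel. exp_dens a1 r * (g r * u r))
        = (LINT r:{t<..}|lborel. exp_dens a1 r * (u r / exp_cdf a1 r) - exp_dens a1 r * u r)"
      by (intro set_lebesgue_integral_cong) (auto simp: g_def max_def algebra_simps)
    then show ?thesis using int_div int_u' by (simp add: set_integral_diff)
  qed
  have M: "(LINT x:{0<..}|lborel. exp_dens a1 x * u x) = lower_int u t + (LINT r:{t<..}|lborel. exp_dens a1 r * u r)"
    unfolding lower_int_def by (rule set_integral_Ioi_split[OF int_u less_imp_le[OF t]])
  have "(LINT s:{t<..}|lborel. exp_dens a1 s / exp_cdf a1 s ^ 2 * lower_int u s)
      = (LINT r:{0<..}|lborel. exp_dens a1 r * (g r * u r))"
    unfolding set_integral_lower_int_weighted[OF u t] by (simp only: g_def)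
  also have "\<dots> = (1 / exp_cdf a1 t - 1) * lower_int u t
      + ((LINT r:{t<..}|lborel. exp_dens a1 r * (u r / exp_cdf a1 r)) - (LINT r:{t<..}|lborel. exp_dens a1 r * u r))"
    by (simp only: set_integral_Ioi_split[OF int_g less_imp_le[OF t]] I0 I1)
  finally show ?thesis
    unfolding M using \<Pi>t by (simp add: field_simps)
qed

text \<open>The derivative of \<open>lower_int u / exp_cdf a1\<close> is \<open>exp_dens a1 / exp_cdf a1 * dev_below u\<close>, and the
  quotient vanishes at infinity for \<open>\<pi>\<close>-centred \<open>u\<close>. Since \<open>lower_int u\<close> is only absolutely continuous,
  the fundamental theorem of calculus is replaced by Fubini's theorem in \<open>set_integral_lower_int_weighted\<close>.\<close>
lemma dev_below_inversion:
  assumes u: "bdd_on_pos B u" and mean: "(LINT x:{0<..}|lborel. exp_dens a1 x * u x) = 0" and t: "0 < t"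
  shows "u t = dev_below u t - (LINT s:{t<..}|lborel. exp_dens a1 s / exp_cdf a1 s * dev_below u s)"
proof -
  have [measurable]: "u \<in> borel_measurable borel" using u by (rule bdd_on_pos_measurable)
  have \<Pi>t: "0 < exp_cdf a1 t" using exp_cdf_pos[OF a1_pos t] .
  have int_div: "set_integrable lborel {t<..} (\<lambda>s. exp_dens a1 s * (u s / exp_cdf a1 s))"
    by (rule set_integrable_div_exp_cdf[OF u t])
  have int_low: "set_integrable lborel {t<..} (\<lambda>s. exp_dens a1 s / exp_cdf a1 s ^ 2 * lower_int u s)"
  proof (rule set_integrable_exp_dens_bound[OF a1_pos, where C="B / exp_cdf a1 t"])
    show "\<bar>exp_dens a1 s / exp_cdf a1 s ^ 2 * lower_int u s\<bar> \<le> B / exp_cdf a1 t * exp_dens a1 s" if "t < s" for s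
    proof -
      have s: "0 < s" "0 < exp_cdf a1 s" "exp_cdf a1 t \<le> exp_cdf a1 s"
        using that t exp_cdf_pos[OF a1_pos, of s] a1_pos by (auto intro: exp_cdf_mono)
      have "\<bar>lower_int u s\<bar> / exp_cdf a1 s ^ 2 \<le> B * exp_cdf a1 s / exp_cdf a1 s ^ 2"
        using abs_lower_int_le[OF u s(1)] s by (intro divide_right_mono) auto
      also have "\<dots> = B / exp_cdf a1 s" using s by (simp add: power2_eq_square)
      also have "\<dots> \<le> B / exp_cdf a1 t"
        using s \<Pi>t bdd_on_pos_nonneg[OF u] by (intro divide_left_mono) auto
      finally have "\<bar>lower_int u s\<bar> / exp_cdf a1 s ^ 2 \<le> B / exp_cdf a1 t" .
      then have "exp_dens a1 s * (\<bar>lower_int u s\<bar> / exp_cdf a1 s ^ 2) \<le> exp_dens a1 s * (B / exp_cdf a1 t)"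
        using dens1_pos[of s] by (intro mult_left_mono) auto
      then show ?thesis
        using dens1_pos[of s] by (simp add: abs_mult ac_simps)
    qed
  qed measurable
  have "(LINT s:{t<..}|lborel. exp_dens a1 s / exp_cdf a1 s * dev_below u s)
      = (LINT s:{t<..}|lborel. exp_dens a1 s * (u s / exp_cdf a1 s) - exp_dens a1 s / exp_cdf a1 s ^ 2 * lower_int u s)"
  proof (intro set_lebesgue_integral_cong ballI allI impI)
    fix s assume "s \<in> {t<..}"
    then have "0 < exp_cdf a1 s" using t exp_cdf_pos[OF a1_pos, of s] by simp
    then show "exp_dens a1 s / exp_cdf a1 s * dev_below u s
        = exp_dens a1 s * (u s / exp_cdf a1 s) - exp_dens a1 s / exp_cdf a1 s ^ 2 * lower_int u s"
      by (simp add: dev_below_def field_simps power2_eq_square)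
  qed simp
  also have "\<dots> = - (lower_int u t / exp_cdf a1 t)"
    using set_integral_lower_int_weighted_eq[OF u t] int_div int_low mean by (simp add: set_integral_diff)
  finally show ?thesis by (simp add: dev_below_def)
qed

lemma imh_P_funpow_eq:
  assumes f: "bdd_on_pos B f" and mean: "(LINT x:{0<..}|lborel. exp_dens a1 x * f x) = 0" and t: "0 < t"
  shows "(P ^^ n) f t = \<rho> t ^ n * dev_below f t
    - (LINT s:{t<..}|lborel. exp_dens a1 s / exp_cdf a1 s * (\<rho> s ^ n * dev_below f s))"
proof -
  have "(LINT s:{t<..}|lborel. exp_dens a1 s / exp_cdf a1 s * dev_below ((P ^^ n) f) s)
      = (LINT s:{t<..}|lborel. exp_dens a1 s / exp_cdf a1 s * (\<rho> s ^ n * dev_below f s))"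
    using t by (intro set_lebesgue_integral_cong) (auto simp: dev_below_imh_P_funpow[OF f])
  then show ?thesis
    using dev_below_inversion[OF bdd_on_pos_imh_P_funpow[OF f] _ t, of n] mean
    by (simp add: set_integral_imh_P_funpow[OF f] dev_below_imh_P_funpow[OF f t])
qed

section \<open>Decay\<close>

definition reject_moment :: "nat \<Rightarrow> real" where
  "reject_moment m = (LINT s:{0<..}|lborel. exp_dens a1 s * \<rho> s ^ m)"

lemma bdd_on_pos_imh_rho_power: "bdd_on_pos 1 (\<lambda>s. \<rho> s ^ m)"
  using imh_rho_nonneg imh_rho_le_1 by (intro bdd_on_posI) (auto simp: power_le_one less_imp_le)

lemma set_integrable_reject_moment:
  "set_integrable lborel A (\<lambda>s. exp_dens a1 s * \<rho> s ^ m)" if "A \<in> sets borel" "A \<subseteq> {0<..}"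
  by (rule set_integrable_exp_dens_mult[OF a1_pos bdd_on_pos_imh_rho_power that])

lemma reject_moment_nonneg: "0 \<le> reject_moment m"
  unfolding reject_moment_def set_lebesgue_integral_def
  using dens1_pos imh_rho_nonneg
  by (intro integral_nonneg_AE AE_I2) (auto split: split_indicator simp: less_imp_le)

lemma reject_moment_le_1: "reject_moment m \<le> 1"
proof -
  have "reject_moment m \<le> (LINT s:{0<..}|lborel. exp_dens a1 s)"
    unfolding reject_moment_def
    using set_integrable_reject_moment[of "{0<..}"] exp_dens_Ioi(1)[OF a1_pos, of 0]
      dens1_pos imh_rho_nonneg imh_rho_le_1
    by (intro set_integral_mono) (auto simp: power_le_one mult_left_le less_imp_le)
  then show ?thesis using exp_dens_Ioi(2)[OF a1_pos, of 0] by simp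
qed

lemma imh_rho_power_div_exp_cdf_le:
  assumes "0 < s" "1 \<le> n"
  shows "\<rho> s ^ n / exp_cdf a1 s \<le> a2 / a1 * \<rho> s ^ (n - 1)"
proof -
  have "\<rho> s ^ n / exp_cdf a1 s = \<rho> s ^ (n - 1) * (\<rho> s / exp_cdf a1 s)"
    using assms(2) by (simp add: power_eq_if)
  also have "\<dots> \<le> \<rho> s ^ (n - 1) * (a2 / a1)"
    using imh_rho_le_exp_cdf[of s] imh_rho_nonneg[of s] exp_cdf_pos[OF a1_pos assms(1)] assms(1)
    by (intro mult_left_mono) (auto simp: field_simps)
  finally show ?thesis by (simp add: mult.commute)
qed

lemma abs_set_integral_dev_below_tail_le:
  assumes dev: "\<And>s. 0 < s \<Longrightarrow> \<bar>dev_below f s\<bar> \<le> K" and n: "1 \<le> n" and t: "0 < t"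
  shows "\<bar>LINT s:{t<..}|lborel. exp_dens a1 s / exp_cdf a1 s * (\<rho> s ^ n * dev_below f s)\<bar>
    \<le> K * (a2 / a1) * reject_moment (n - 1)"
proof -
  have K: "0 \<le> K * (a2 / a1)" using dev[of 1] a1_pos a2_pos by simp
  have "\<bar>LINT s:{t<..}|lborel. exp_dens a1 s / exp_cdf a1 s * (\<rho> s ^ n * dev_below f s)\<bar>
      \<le> (LINT s:{t<..}|lborel. K * (a2 / a1) * (exp_dens a1 s * \<rho> s ^ (n - 1)))"
  proof (rule abs_set_integral_le)
    show "set_integrable lborel {t<..} (\<lambda>s. K * (a2 / a1) * (exp_dens a1 s * \<rho> s ^ (n - 1)))"
      using t by (intro set_integrable_mult_right set_integrable_reject_moment) auto
    show "\<bar>exp_dens a1 s / exp_cdf a1 s * (\<rho> s ^ n * dev_below f s)\<bar>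
        \<le> K * (a2 / a1) * (exp_dens a1 s * \<rho> s ^ (n - 1))" if "s \<in> {t<..}" for s
    proof -
      have s: "0 < s" "0 < exp_cdf a1 s" using that t exp_cdf_pos[OF a1_pos, of s] by auto
      have "\<rho> s ^ n / exp_cdf a1 s * \<bar>dev_below f s\<bar> \<le> a2 / a1 * \<rho> s ^ (n - 1) * K"
        using imh_rho_power_div_exp_cdf_le[OF s(1) n] dev[OF s(1)] imh_rho_nonneg[of s] s a1_pos a2_pos
        by (intro mult_mono) auto
      then have "exp_dens a1 s * (\<rho> s ^ n / exp_cdf a1 s * \<bar>dev_below f s\<bar>)
          \<le> exp_dens a1 s * (a2 / a1 * \<rho> s ^ (n - 1) * K)"
        using dens1_pos[of s] by (intro mult_left_mono) auto
      then show ?thesis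
        using s dens1_pos[of s] imh_rho_nonneg[of s] by (simp add: abs_mult ac_simps)
    qed
  qed
  also have "\<dots> \<le> K * (a2 / a1) * reject_moment (n - 1)"
  proof -
    have "0 \<le> (LINT s:{0<..t}|lborel. exp_dens a1 s * \<rho> s ^ (n - 1))"
      unfolding set_lebesgue_integral_def using dens1_pos imh_rho_nonneg
      by (intro integral_nonneg_AE AE_I2) (auto split: split_indicator simp: less_imp_le)
    then have "(LINT s:{t<..}|lborel. exp_dens a1 s * \<rho> s ^ (n - 1)) \<le> reject_moment (n - 1)"
      unfolding reject_moment_def
      using set_integral_Ioi_split[OF set_integrable_reject_moment less_imp_le[OF t]] by simp
    with K show ?thesis by (simp only: set_integral_mult_right mult_left_mono)
  qed
  finally show ?thesis .
qed

lemma abs_imh_P_funpow_le: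
  assumes f: "bdd_on_pos B f" and mean: "(LINT x:{0<..}|lborel. exp_dens a1 x * f x) = 0"
    and dev: "\<And>s. 0 < s \<Longrightarrow> \<bar>dev_below f s\<bar> \<le> K" and n: "1 \<le> n" and t: "0 < t"
  shows "\<bar>(P ^^ n) f t\<bar> \<le> K * \<rho> t ^ n + K * (a2 / a1) * reject_moment (n - 1)"
proof -
  have "\<bar>\<rho> t ^ n * dev_below f t\<bar> \<le> K * \<rho> t ^ n"
    using mult_right_mono[OF dev[OF t] zero_le_power[OF imh_rho_nonneg, of t n]] t
    by (simp add: abs_mult imh_rho_nonneg mult.commute)
  then show ?thesis
    using abs_set_integral_dev_below_tail_le[OF dev n t]
    unfolding imh_P_funpow_eq[OF f mean t] by (smt (verit) abs_triangle_ineq4)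
qed

lemma imh_P_funpow_sq_le:
  assumes f: "bdd_on_pos B f" and mean: "(LINT x:{0<..}|lborel. exp_dens a1 x * f x) = 0"
    and dev: "\<And>s. 0 < s \<Longrightarrow> \<bar>dev_below f s\<bar> \<le> K" and n: "1 \<le> n" and x: "0 < x"
  shows "((P ^^ n) f x)\<^sup>2 \<le> 2 * K\<^sup>2 * \<rho> x ^ (n - 1) + 2 * K\<^sup>2 * (a2 / a1)\<^sup>2 * (reject_moment (n - 1))\<^sup>2"
proof -
  define L where "L = reject_moment (n - 1)"
  define c where "c = a2 / a1"
  have "\<rho> x ^ n \<le> 1" "\<rho> x ^ n \<le> \<rho> x ^ (n - 1)" "0 \<le> \<rho> x ^ n"
    using imh_rho_nonneg[of x] imh_rho_le_1[of x] x by (auto intro: power_decreasing power_le_one)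
  then have "\<rho> x ^ n * \<rho> x ^ n \<le> 1 * \<rho> x ^ (n - 1)" by (intro mult_mono) auto
  then have "K\<^sup>2 * (\<rho> x ^ n * \<rho> x ^ n) \<le> K\<^sup>2 * \<rho> x ^ (n - 1)" by (intro mult_left_mono) auto
  then have "(K * \<rho> x ^ n)\<^sup>2 \<le> K\<^sup>2 * \<rho> x ^ (n - 1)"
    by (simp add: power2_eq_square ac_simps)
  moreover have "\<bar>(P ^^ n) f x\<bar> \<le> K * \<rho> x ^ n + K * c * L"
    unfolding L_def c_def by (rule abs_imh_P_funpow_le[OF f mean dev n x])
  then have "((P ^^ n) f x)\<^sup>2 \<le> (K * \<rho> x ^ n + K * c * L)\<^sup>2"
    by (simp add: abs_le_square_iff[symmetric] abs_of_nonneg order_trans[OF abs_ge_zero])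
  moreover have "(K * \<rho> x ^ n + K * c * L)\<^sup>2 \<le> 2 * (K * \<rho> x ^ n)\<^sup>2 + 2 * (K * c * L)\<^sup>2"
    using sum_squares_bound[of "K * \<rho> x ^ n" "K * c * L"] by (simp add: power2_eq_square algebra_simps)
  ultimately have "((P ^^ n) f x)\<^sup>2 \<le> 2 * K\<^sup>2 * \<rho> x ^ (n - 1) + 2 * K\<^sup>2 * c\<^sup>2 * L\<^sup>2"
    by (simp add: power_mult_distrib)
  then show ?thesis by (simp only: L_def c_def)
qed

lemma set_integral_imh_P_funpow_sq_le:
  assumes f: "bdd_on_pos B f" and mean: "(LINT x:{0<..}|lborel. exp_dens a1 x * f x) = 0"
    and dev: "\<And>s. 0 < s \<Longrightarrow> \<bar>dev_below f s\<bar> \<le> K" and n: "1 \<le> n"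
  shows "(LINT x:{0<..}|lborel. exp_dens a1 x * ((P ^^ n) f x)\<^sup>2)
    \<le> 2 * K\<^sup>2 * (1 + (a2 / a1)\<^sup>2) * reject_moment (n - 1)"
proof -
  define L where "L = reject_moment (n - 1)"
  define c where "c = a2 / a1"
  have L: "0 \<le> L" "L \<le> 1" unfolding L_def by (rule reject_moment_nonneg reject_moment_le_1)+
  note pointwise = imh_P_funpow_sq_le[OF f mean dev n, folded L_def c_def]
  have "(LINT x:{0<..}|lborel. exp_dens a1 x * ((P ^^ n) f x)\<^sup>2)
      \<le> (LINT x:{0<..}|lborel. 2 * K\<^sup>2 * (exp_dens a1 x * \<rho> x ^ (n - 1)) + 2 * K\<^sup>2 * c\<^sup>2 * L\<^sup>2 * exp_dens a1 x)"
  proof (rule set_integral_mono)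
    show "set_integrable lborel {0<..} (\<lambda>x. exp_dens a1 x * ((P ^^ n) f x)\<^sup>2)"
      using bdd_on_pos_mult[OF bdd_on_pos_imh_P_funpow[OF f] bdd_on_pos_imh_P_funpow[OF f]]
      by (intro set_integrable_exp_dens_mult[OF a1_pos]) (auto simp: power2_eq_square)
    show "set_integrable lborel {0<..} (\<lambda>x. 2 * K\<^sup>2 * (exp_dens a1 x * \<rho> x ^ (n - 1)) + 2 * K\<^sup>2 * c\<^sup>2 * L\<^sup>2 * exp_dens a1 x)"
      using set_integrable_reject_moment[of "{0<..}" "n - 1"] exp_dens_Ioi(1)[OF a1_pos, of 0] by simp
    show "exp_dens a1 x * ((P ^^ n) f x)\<^sup>2 \<le> 2 * K\<^sup>2 * (exp_dens a1 x * \<rho> x ^ (n - 1)) + 2 * K\<^sup>2 * c\<^sup>2 * L\<^sup>2 * exp_dens a1 x"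
      if "x \<in> {0<..}" for x
      using mult_left_mono[OF pointwise[of x] less_imp_le[OF dens1_pos[of x]]] that
      by (simp add: algebra_simps)
  qed
  also have "\<dots> = 2 * K\<^sup>2 * L + 2 * K\<^sup>2 * c\<^sup>2 * L\<^sup>2"
    using set_integrable_reject_moment[of "{0<..}" "n - 1"] exp_dens_Ioi[OF a1_pos, of 0]
    by (simp add: L_def reject_moment_def)
  also have "\<dots> \<le> 2 * K\<^sup>2 * (1 + c\<^sup>2) * L"
  proof -
    have "L\<^sup>2 \<le> L" using L by (simp add: power2_eq_square mult_left_le_one_le)
    then have "2 * K\<^sup>2 * c\<^sup>2 * L\<^sup>2 \<le> 2 * K\<^sup>2 * c\<^sup>2 * L" by (intro mult_left_mono) auto
    then show ?thesis by (simp add: algebra_simps)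
  qed
  finally show ?thesis unfolding L_def c_def .
qed

lemma reject_moment_le:
  assumes n: "1 \<le> n"
  shows "reject_moment (n - 1)
    \<le> exp 1 * (\<integral>s. exp (- exp (- (a2 - a1) * s)) * exp_dens a1 s \<partial>lborel) * real n powr (- (a1 / (a2 - a1)))"
proof -
  have b: "0 < a2 - a1" using a1_less_a2 by simp
  have "exp_dens a1 s * \<rho> s ^ (n - 1) \<le> exp 1 * (exp (- real n * exp (- (a2 - a1) * s)) * exp_dens a1 s)"
    if s: "0 < s" for s
  proof -
    define v where "v = exp (- (a2 - a1) * s)"
    have "- (a2 - a1) * s \<le> 0" using mult_pos_pos[OF b s] by linarith
    then have v: "0 < v" "v \<le> 1" by (auto simp: v_def)
    have "\<rho> s ^ (n - 1) \<le> (1 - v) ^ (n - 1)"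
      using imh_rho_nonneg[of s] imh_rho_le[of s] s by (intro power_mono) (auto simp: v_def)
    also have "\<dots> \<le> exp (- v) ^ (n - 1)"
      using v exp_ge_add_one_self[of "- v"] by (intro power_mono) auto
    also have "\<dots> = exp v * exp (- real n * v)"
      using n by (simp add: exp_of_nat_mult[symmetric] exp_add[symmetric] of_nat_diff algebra_simps)
    also have "\<dots> \<le> exp 1 * exp (- real n * v)" using v by simp
    finally show ?thesis
      using dens1_pos[of s] by (simp add: v_def mult_left_mono mult.commute mult.left_commute)
  qed
  moreover have "integrable lborel (\<lambda>s. exp 1 * (exp (- real n * exp (- (a2 - a1) * s)) * exp_dens a1 s))"
    using integral_exp_minus_mult_exp_mult_exp_dens(1)[OF a1_pos b, of "real n"] n by simp
  ultimately have "reject_moment (n - 1) \<le> (\<integral>s. exp 1 * (exp (- real n * exp (- (a2 - a1) * s)) * exp_dens a1 s) \<partial>lborel)"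
    unfolding reject_moment_def set_lebesgue_integral_def
    using set_integrable_reject_moment[of "{0<..}" "n - 1"] dens1_pos
    by (intro integral_mono) (auto simp: set_integrable_def split: split_indicator)
  also have "\<dots> = exp 1 * (\<integral>s. exp (- real n * exp (- (a2 - a1) * s)) * exp_dens a1 s \<partial>lborel)"
    by simp
  also have "\<dots> = exp 1 * (\<integral>s. exp (- exp (- (a2 - a1) * s)) * exp_dens a1 s \<partial>lborel) * real n powr (- (a1 / (a2 - a1)))"
    using integral_exp_minus_mult_exp_mult_exp_dens(2)[OF a1_pos b, of "real n"] n by simp
  finally show ?thesis .
qed

lemma imh_P_funpow_cong_AE:
  assumes [measurable]: "u \<in> borel_measurable borel" "v \<in> borel_measurable borel"
    and uv: "AE y in lborel. 0 < y \<longrightarrow> u y = v y"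
  shows "AE y in lborel. 0 < y \<longrightarrow> (P ^^ n) u y = (P ^^ n) v y"
proof (induction n)
  case (Suc n)
  have [measurable]: "(P ^^ n) u \<in> borel_measurable borel" "(P ^^ n) v \<in> borel_measurable borel"
    by (simp_all add: imh_P_funpow_measurable)
  have "accept_op ((P ^^ n) u) x = accept_op ((P ^^ n) v) x" for x
    unfolding accept_op_def using Suc by (intro set_lebesgue_integral_cong_AE) (auto elim!: eventually_mono)
  with Suc show ?case
    by (auto simp: imh_P_eq[of "(P ^^ n) u"] imh_P_eq[of "(P ^^ n) v"] elim!: eventually_mono)
qed (use uv in simp)

lemma integral_piM_imh_P_funpow_sq_le:
  assumes [measurable]: "f \<in> borel_measurable borel"
    and mean: "(\<integral>x. f x \<partial>piM a1) = 0"
    and "lo \<le> hi" and bounds: "AE x in piM a1. lo \<le> f x \<and> f x \<le> hi" and n: "1 \<le> n"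
  shows "(\<integral>x. ((P ^^ n) f x)\<^sup>2 \<partial>piM a1) \<le> 2 * (hi - lo)\<^sup>2 * (1 + (a2 / a1)\<^sup>2) * reject_moment (n - 1)"
proof -
  define g where "g x = max lo (min hi (f x))" for x
  have [measurable]: "g \<in> borel_measurable borel" unfolding g_def[abs_def] by measurable
  have g: "g x \<in> {lo..hi}" for x using \<open>lo \<le> hi\<close> by (simp add: g_def)
  have "AE x in piM a1. f x = g x" using bounds by eventually_elim (simp add: g_def)
  then have fg: "AE x in lborel. 0 < x \<longrightarrow> f x = g x" by (simp add: AE_piM_iff[OF a1_pos])
  have "(\<integral>x. f x \<partial>piM a1) = (LINT x:{0<..}|lborel. exp_dens a1 x * f x)"
    by (simp add: integral_piM[OF a1_pos])
  also have "\<dots> = (LINT x:{0<..}|lborel. exp_dens a1 x * g x)"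
    using fg by (intro set_lebesgue_integral_cong_AE) (auto elim!: eventually_mono)
  finally have mean_g: "(LINT x:{0<..}|lborel. exp_dens a1 x * g x) = 0" using mean by simp
  have bdd_g: "bdd_on_pos (max \<bar>lo\<bar> \<bar>hi\<bar>) g" by (rule bdd_on_pos_interval) (use g in auto)
  have dev: "\<bar>dev_below g s\<bar> \<le> hi - lo" if "0 < s" for s
    by (rule abs_dev_below_le) (use g that in auto)
  have [measurable]: "(P ^^ n) f \<in> borel_measurable borel" "(P ^^ n) g \<in> borel_measurable borel"
    by (simp_all add: imh_P_funpow_measurable)
  have "AE x in piM a1. ((P ^^ n) f x)\<^sup>2 = ((P ^^ n) g x)\<^sup>2"
    using imh_P_funpow_cong_AE[OF _ _ fg, of n] by (simp add: AE_piM_iff[OF a1_pos] eventually_mono)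
  then have "(\<integral>x. ((P ^^ n) f x)\<^sup>2 \<partial>piM a1) = (\<integral>x. ((P ^^ n) g x)\<^sup>2 \<partial>piM a1)"
    by (intro integral_cong_AE) simp_all
  also have "\<dots> = (LINT x:{0<..}|lborel. exp_dens a1 x * ((P ^^ n) g x)\<^sup>2)"
    by (simp add: integral_piM[OF a1_pos])
  also have "\<dots> \<le> 2 * (hi - lo)\<^sup>2 * (1 + (a2 / a1)\<^sup>2) * reject_moment (n - 1)"
    by (rule set_integral_imh_P_funpow_sq_le[OF bdd_g mean_g dev n])
  finally show ?thesis .
qed

lemma ereal_integral_piM_imh_P_funpow_sq_le:
  assumes f: "f \<in> L2_0 (piM a1)" and n: "1 \<le> n" and C: "0 < C" and r: "0 < r"
    and moment: "2 * (1 + (a2 / a1)\<^sup>2) * reject_moment (n - 1) \<le> C * r"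
  shows "ereal (\<integral>x. ((P ^^ n) f x)\<^sup>2 \<partial>piM a1) \<le> ereal C * (osc (piM a1) f)\<^sup>2 * ereal r"
proof -
  have f': "f \<in> borel_measurable borel" "(\<integral>x. f x \<partial>piM a1) = 0"
    using f measurable_cong_sets[OF sets_piM refl] by (auto simp: L2_0_def)
  from prob_space_piM[OF a1_pos] show ?thesis
  proof (cases rule: osc_cases[where f=f])
    case infinite
    then show ?thesis using C r by simp
  next
    case (finite lo hi)
    have "(\<integral>x. ((P ^^ n) f x)\<^sup>2 \<partial>piM a1) \<le> 2 * (hi - lo)\<^sup>2 * (1 + (a2 / a1)\<^sup>2) * reject_moment (n - 1)"
      by (rule integral_piM_imh_P_funpow_sq_le[OF f' finite(1,3) n])
    also have "\<dots> \<le> C * (hi - lo)\<^sup>2 * r"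
      using mult_left_mono[OF moment, of "(hi - lo)\<^sup>2"] by (simp add: algebra_simps)
    finally show ?thesis using finite(2) by simp
  qed
qed

lemma reject_moment_decay:
  obtains C where "0 < C" "\<And>n. 1 \<le> n \<Longrightarrow> reject_moment (n - 1) \<le> C * real n powr (- (a1 / (a2 - a1)))"
proof
  have "0 < a2 - a1" using a1_less_a2 by simp
  then show "0 < exp 1 * (\<integral>s. exp (- exp (- (a2 - a1) * s)) * exp_dens a1 s \<partial>lborel)"
    by (intro mult_pos_pos exp_gt_zero integral_exp_minus_exp_mult_exp_dens_pos[OF a1_pos])
qed (rule reject_moment_le)

end

theorem proposition28:
  fixes a1 a2 :: real
  assumes "0 < a1" and "a1 < a2"
  shows "\<exists>C>0. \<forall>f \<in> L2_0 (piM a1). \<forall>n::nat. n \<ge> 1 \<longrightarrow>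
           ereal (\<integral>x. ((imh_P a1 a2 ^^ n) f x)\<^sup>2 \<partial>piM a1)
             \<le> ereal C * (osc (piM a1) f)\<^sup>2 * ereal (real n powr (- (a1 / (a2 - a1))))"
proof -
  interpret imh a1 a2 using assms by unfold_locales
  obtain C0 where "0 < C0" and C0: "\<And>n. 1 \<le> n \<Longrightarrow> reject_moment (n - 1) \<le> C0 * real n powr (- (a1 / (a2 - a1)))"
    using reject_moment_decay by blast
  define C where "C = 2 * (1 + (a2 / a1)\<^sup>2) * C0"
  have "0 < C" using \<open>0 < C0\<close> by (simp add: C_def add_pos_nonneg)
  moreover have "ereal (\<integral>x. ((P ^^ n) f x)\<^sup>2 \<partial>piM a1)
      \<le> ereal C * (osc (piM a1) f)\<^sup>2 * ereal (real n powr (- (a1 / (a2 - a1))))"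
    if "f \<in> L2_0 (piM a1)" "1 \<le> n" for f n
    using that \<open>0 < C\<close> mult_left_mono[OF C0[OF that(2)], of "2 * (1 + (a2 / a1)\<^sup>2)"]
    by (intro ereal_integral_piM_imh_P_funpow_sq_le) (simp_all add: C_def ac_simps)
  ultimately show ?thesis by blast
qed

end
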